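(* Let $n\ge2$, let $u_0,\dots,u_{n-2}$ be unitaries on $(\mathbb{C}^2)^{\otimes n}$ with $u_t$ acting on qubits $t,t+1$, and $u_{n-1}=c\,\mathbb{1}$ with $|c|=1$. Set $U_{t:0}=u_{t-1}\cdots u_0$ ($U_{0:0}=\mathbb{1}$), and for an increasing tuple $\mathbf t=(t_1<\dots<t_m)$ in $\{0,\dots,n-1\}$ set $U_{\mathbf t:0}=U_{t_1:0}U_{t_2:0}\cdots U_{t_m:0}$ and $c_{\mathbf t}^\dagger=c_{t_1}^\dagger\cdots c_{t_m}^\dagger$, where $c_0,\dots,c_{n-1}$ are spinless fermion modes with vacuum $|\Omega\rangle$. Let $U_{n:0}|\phi\rangle=e^{i\phi}|\phi\rangle$. For distinct momenta $\mathbf k=(k_1,\dots,k_M)$ with $k_j\in\frac{2\pi}{n}\{0,\dots,n-1\}$, let $$c^\dagger_{\mathbf k,\phi}=\prod_{k\in\mathbf k}\Big[\tfrac{1}{\sqrt n}\sum_{t=0}^{n-1}e^{i(k-\phi/n)t}c_t^\dagger\Big],$$ write $c^\dagger_{\mathbf k,\phi}|\Omega\rangle=\sum_{\mathbf t}\varphi_{\mathbf k,\phi}(\mathbf t)\,c_{\mathbf t}^\dagger|\Omega\rangle$ (sum over increasing $M$-tuples), and define the eigenstate of the many-hand periodic clock Hamiltonian $H=\sum_{t=0}^{n-1}[\mathbb{1}\otimes c_t^\dagger c_t-\frac12(u_t\otimes c^\dagger_{t+1}c_t+\mathrm{h.c.})]$ ($c_n\equiv c_0$) $$|\Psi_{\mathbf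 k,\phi}\rangle=\sum_{\mathbf t}\varphi_{\mathbf k,\phi}(\mathbf t)\,U_{\mathbf t:0}|\phi\rangle\otimes c_{\mathbf t}^\dagger|\Omega\rangle .$$ Let $A$ consist of the qubits and fermion modes at the sites of a cyclic interval of $\{0,\dots,n-1\}$. Then $$S^{(2)}_A(|\Psi_{\mathbf k,\phi}\rangle)\ \ge\ S^{(2)}_A(c^\dagger_{\mathbf k,\phi}|\Omega\rangle)+\min_{\mathbf t}S^{(2)}_A(U_{\mathbf t:0}|\phi\rangle),$$ where the minimum runs over increasing tuples $\mathbf t$ with at most $M$ entries, and in the last term $A$ denotes its set of qubits.
   Context: The second Rényi entropy is $S^{(2)}_A(|\Psi\rangle)=-\ln\mathrm{Tr}(\rho_A^2)$, with $\rho_A$ the reduced density matrix of $|\Psi\rangle$ on $A$ (for fermionic modes, via the standard fermionic partial trace, equivalently Jordan–Wigner two-level sites). *)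

theory Defs
  imports Complex_Main
begin

text \<open>Computational basis of (C^2)^{tensor n}: subsets S of {..<n} (the qubits in state 1).
  Fermionic Fock space on modes 0..n-1 (Jordan-Wigner ordering): basis indexed by the
  set F of occupied modes; the basis vector for F = {t1<...<tm} is c_t1^dag ... c_tm^dag |Omega>.\<close>

type_synonym qvec = "nat set \<Rightarrow> complex"
type_synonym qmat = "nat set \<Rightarrow> nat set \<Rightarrow> complex"

definition idm :: qmat where
  "idm S T = (if S = T then 1 else 0)"

definition mmult :: "nat \<Rightarrow> qmat \<Rightarrow> qmat \<Rightarrow> qmat" where
  "mmult n A B S T = (\<Sum>R\<in>Pow {..<n}. A S R * B R T)"

definition mvec :: "nat \<Rightarrow> qmat \<Rightarrow> qvec \<Rightarrow> qvec" where
  "mvec n A v S = (\<Sum>R\<in>Pow {..<n}. A S R * v R)"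

definition unitary_on :: "nat \<Rightarrow> qmat \<Rightarrow> bool" where
  "unitary_on n U \<longleftrightarrow> (\<forall>S\<in>Pow {..<n}. \<forall>T\<in>Pow {..<n}.
      (\<Sum>R\<in>Pow {..<n}. U S R * cnj (U T R)) = idm S T)"

definition acts_on_pair :: "nat \<Rightarrow> qmat \<Rightarrow> nat \<Rightarrow> bool" where
  "acts_on_pair n U t \<longleftrightarrow> (\<exists>w :: bool \<Rightarrow> bool \<Rightarrow> bool \<Rightarrow> bool \<Rightarrow> complex.
      \<forall>S\<in>Pow {..<n}. \<forall>T\<in>Pow {..<n}.
        U S T = (if S - {t, Suc t} = T - {t, Suc t}
                 then w (t \<in> S) (Suc t \<in> S) (t \<in> T) (Suc t \<in> T) else 0))"

fun Uprod :: "nat \<Rightarrow> (nat \<Rightarrow> qmat) \<Rightarrow> nat \<Rightarrow> qmat" where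
  "Uprod n u 0 = idm"
| "Uprod n u (Suc t) = mmult n (u t) (Uprod n u t)"

definition UT :: "nat \<Rightarrow> (nat \<Rightarrow> qmat) \<Rightarrow> nat set \<Rightarrow> qvec \<Rightarrow> qvec" where
  "UT n u T v = foldr (\<lambda>t w. mvec n (Uprod n u t) w) (sorted_list_of_set T) v"

definition vac :: qvec where
  "vac F = (if F = {} then 1 else 0)"

definition cdag :: "nat \<Rightarrow> qvec \<Rightarrow> qvec" where
  "cdag t v F = (if t \<in> F then (-1) ^ card {s\<in>F. s < t} * v (F - {t}) else 0)"

definition cdag_mom :: "nat \<Rightarrow> real \<Rightarrow> real \<Rightarrow> qvec \<Rightarrow> qvec" where
  "cdag_mom n theta k v F =
     (\<Sum>t<n. complex_of_real (1 / sqrt (real n))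
             * exp (\<i> * complex_of_real ((k - theta / real n) * real t)) * cdag t v F)"

text \<open>c^dag_{k,theta} |Omega> for momenta k_j = 2 pi m_j / n, product in the order k_1 ... k_M.
  Its coefficient at F is varphi_{k,theta}(F).\<close>
definition slater :: "nat \<Rightarrow> real \<Rightarrow> nat list \<Rightarrow> qvec" where
  "slater n theta ms =
     foldr (\<lambda>m v. cdag_mom n theta (2 * pi * real m / real n) v) ms vac"

text \<open>The eigenstate Psi_{k,theta}: amplitude at (qubit basis S, fermion occupation F).\<close>
definition Psi :: "nat \<Rightarrow> (nat \<Rightarrow> qmat) \<Rightarrow> real \<Rightarrow> qvec \<Rightarrow> nat list \<Rightarrow> nat set \<Rightarrow> nat set \<Rightarrow> complex" where
  "Psi n u theta phi ms S F = slater n theta ms F * UT n u F phi S"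

text \<open>Tr(rho_A^2) for a pure state on n two-level sites (qubits or JW fermion modes).\<close>
definition purity :: "nat \<Rightarrow> nat set \<Rightarrow> qvec \<Rightarrow> real" where
  "purity n A \<psi> = Re (\<Sum>a\<in>Pow A. \<Sum>a'\<in>Pow A. \<Sum>b\<in>Pow ({..<n} - A). \<Sum>b'\<in>Pow ({..<n} - A).
      \<psi> (a \<union> b) * cnj (\<psi> (a' \<union> b)) * \<psi> (a' \<union> b') * cnj (\<psi> (a \<union> b')))"

definition renyi2 :: "nat \<Rightarrow> nat set \<Rightarrow> qvec \<Rightarrow> real" where
  "renyi2 n A \<psi> = - ln (purity n A \<psi>)"

text \<open>Same for the joint system qubits tensor fermions, with A containing both the qubits
  and the fermion modes at sites in A.\<close>
definition purity_joint :: "nat \<Rightarrow> nat set \<Rightarrow> (nat set \<Rightarrow> nat set \<Rightarrow> complex) \<Rightarrow> real" where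
  "purity_joint n A \<Psi> = Re (
     \<Sum>aq\<in>Pow A. \<Sum>af\<in>Pow A. \<Sum>aq'\<in>Pow A. \<Sum>af'\<in>Pow A.
     \<Sum>bq\<in>Pow ({..<n} - A). \<Sum>bf\<in>Pow ({..<n} - A).
     \<Sum>bq'\<in>Pow ({..<n} - A). \<Sum>bf'\<in>Pow ({..<n} - A).
       \<Psi> (aq \<union> bq) (af \<union> bf) * cnj (\<Psi> (aq' \<union> bq) (af' \<union> bf))
     * \<Psi> (aq' \<union> bq') (af' \<union> bf') * cnj (\<Psi> (aq \<union> bq') (af \<union> bf')))"

definition renyi2_joint :: "nat \<Rightarrow> nat set \<Rightarrow> (nat set \<Rightarrow> nat set \<Rightarrow> complex) \<Rightarrow> real" where
  "renyi2_joint n A \<Psi> = - ln (purity_joint n A \<Psi>)"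

definition cyclic_interval :: "nat \<Rightarrow> nat set \<Rightarrow> bool" where
  "cyclic_interval n A \<longleftrightarrow> (\<exists>a l. a < n \<and> l \<le> n \<and> A = {(a + j) mod n | j. j < l})"

end

theory Submission
  imports Defs "Jordan_Normal_Form.Determinant"
begin

(*
  Write F for the set of occupied fermion sites, so that Psi(S, F) = varphi(F) (U_{F:0} phi)(S).
  Let A = [p, q) be an interval. Gates acting on disjoint qubits commute, and since phi is an
  eigenvector of the full cycle U_{n:0} = (u_{n-1} ... u_r) U_{r:0}, the operator U_{r:0} acts on phi
  like a unitary supported on [r, n). Pushing all factors with t outside A away from A and
  compressing those with t in A to consecutive times gives

    U_{F:0} phi = V_{F \<inter> A} W_{F - A} U_{[p, p + |F \<inter> A|):0} phi

  with V_x unitary on the qubits of A and W_y unitary on the remaining qubits. In the reduced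
  density matrix of Psi on A the W's cancel, the V's act by unitary conjugation, and since varphi
  lives on a fixed particle number its reduced density matrix rho^f is block diagonal in k = |F \<inter> A|.
  Hence Tr rho_A^2 = sum_{a,a'} |rho^f(a, a')|^2 Tr (rho^(|a|))^2, where rho^(k) is the reduced state of
  U_{[p, p + k):0} phi, and bounding Tr (rho^(k))^2 by its maximum over k and taking -ln gives the
  claim. A cyclic interval that wraps around is the complement of an interval, and Renyi entropies
  of a pure state agree on complementary regions.
*)

lemma sum_eq_single:
  assumes "finite X" "x \<in> X" "\<And>y. y \<in> X \<Longrightarrow> y \<noteq> x \<Longrightarrow> f y = 0"
  shows "(\<Sum>y\<in>X. f y) = f x"
  using assms sum.mono_neutral_left[of X "{x}" f] by auto

lemma sum_Pow_split:
  assumes "finite X" "A \<subseteq> X"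
  shows "(\<Sum>S\<in>Pow X. f S) = (\<Sum>a\<in>Pow A. \<Sum>b\<in>Pow (X - A). f (a \<union> b))"
proof -
  have "bij_betw (\<lambda>(a, b). a \<union> b) (Pow A \<times> Pow (X - A)) (Pow X)"
    by (rule bij_betw_byWitness[where f' = "\<lambda>S. (S \<inter> A, S - A)"]) (use assms(2) in auto)
  then show ?thesis
    by (simp add: sum.cartesian_product sum.reindex_bij_betw[symmetric] case_prod_unfold)
qed

lemma diag_le_double_sum:
  fixes f :: "'a \<Rightarrow> 'a \<Rightarrow> real"
  assumes "finite X" "x \<in> X" "\<And>x x'. 0 \<le> f x x'"
  shows "f x x \<le> (\<Sum>x\<in>X. \<Sum>x'\<in>X. f x x')"
proof -
  have "f x x \<le> (\<Sum>x'\<in>X. f x x')"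
    using assms by (intro member_le_sum) auto
  also have "\<dots> \<le> (\<Sum>x\<in>X. \<Sum>x'\<in>X. f x x')"
    using assms by (intro member_le_sum[of x X "\<lambda>x. \<Sum>x'\<in>X. f x x'"] sum_nonneg) auto
  finally show ?thesis .
qed

lemma sum_norm_isometry:
  fixes M :: "'a \<Rightarrow> 'a \<Rightarrow> complex"
  assumes "finite D"
    and orth: "\<And>r r'. r \<in> D \<Longrightarrow> r' \<in> D \<Longrightarrow> (\<Sum>a\<in>D. cnj (M a r) * M a r') = (if r = r' then 1 else 0)"
  shows "(\<Sum>a\<in>D. (cmod (\<Sum>r\<in>D. M a r * x r))\<^sup>2) = (\<Sum>r\<in>D. (cmod (x r))\<^sup>2)"
proof -
  have orth': "(\<Sum>a\<in>D. M a r * cnj (M a r')) = (if r = r' then 1 else 0)" if "r \<in> D" "r' \<in> D" for r r'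
    using arg_cong[OF orth[OF that], of cnj] by (simp add: mult.commute)
  have "complex_of_real (\<Sum>a\<in>D. (cmod (\<Sum>r\<in>D. M a r * x r))\<^sup>2)
      = (\<Sum>a\<in>D. \<Sum>r\<in>D. \<Sum>r'\<in>D. (M a r * cnj (M a r')) * (x r * cnj (x r')))"
    unfolding of_real_sum complex_norm_square cnj_sum sum_product
    by (intro sum.cong refl) (simp add: mult_ac)
  also have "\<dots> = (\<Sum>r\<in>D. \<Sum>r'\<in>D. (\<Sum>a\<in>D. M a r * cnj (M a r')) * (x r * cnj (x r')))"
    unfolding sum_distrib_right by (subst sum.swap, intro sum.cong refl sum.swap)
  also have "\<dots> = (\<Sum>r\<in>D. x r * cnj (x r))"
    using \<open>finite D\<close> by (simp add: orth' if_distrib[of "\<lambda>x. x * _"] cong: if_cong)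
  also have "\<dots> = complex_of_real (\<Sum>r\<in>D. (cmod (x r))\<^sup>2)"
    unfolding of_real_sum complex_norm_square ..
  finally show ?thesis
    by (simp only: of_real_eq_iff)
qed

lemma finite_index_left_right_inverse:
  fixes A B :: "'x \<Rightarrow> 'x \<Rightarrow> 'a::field"
  assumes "finite X"
    and "\<forall>i\<in>X. \<forall>j\<in>X. (\<Sum>k\<in>X. A i k * B k j) = (if i = j then 1 else 0)"
  shows "\<forall>i\<in>X. \<forall>j\<in>X. (\<Sum>k\<in>X. B i k * A k j) = (if i = j then 1 else 0)"
proof -
  define N where "N = card X"
  obtain h where h: "bij_betw h {0..<N} X"
    using ex_bij_betw_nat_finite[OF assms(1)] unfolding N_def by blast
  have reindex: "(\<Sum>k\<in>X. f k) = (\<Sum>k\<in>{0..<N}. f (h k))" for f :: "'x \<Rightarrow> 'a"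
    using sum.reindex_bij_betw[OF h, of f] by simp
  have h_inj: "h i = h j \<longleftrightarrow> i = j" if "i < N" "j < N" for i j
    using h that by (auto simp: bij_betw_def inj_on_def)
  define MA where "MA = mat N N (\<lambda>(i, j). A (h i) (h j))"
  define MB where "MB = mat N N (\<lambda>(i, j). B (h i) (h j))"
  have "MA * MB = 1\<^sub>m N"
  proof (rule eq_matI)
    fix i j assume "i < dim_row (1\<^sub>m N)" "j < dim_col (1\<^sub>m N)"
    then have ij: "i < N" "j < N"
      by auto
    have "h i \<in> X" "h j \<in> X"
      using bij_betwE[OF h] ij by auto
    have "(MA * MB) $$ (i, j) = (\<Sum>k\<in>X. A (h i) k * B k (h j))"
      using ij by (simp add: MA_def MB_def scalar_prod_def reindex)
    also have "\<dots> = (if h i = h j then 1 else 0)"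
      using assms(2) \<open>h i \<in> X\<close> \<open>h j \<in> X\<close> by blast
    also have "\<dots> = 1\<^sub>m N $$ (i, j)"
      using h_inj[OF ij] ij by simp
    finally show "(MA * MB) $$ (i, j) = 1\<^sub>m N $$ (i, j)" .
  qed (simp_all add: MA_def MB_def)
  then have BA: "MB * MA = 1\<^sub>m N"
    by (intro mat_mult_left_right_inverse[of MA N MB]) (simp_all add: MA_def MB_def)
  show ?thesis
  proof (intro ballI)
    fix x y assume "x \<in> X" "y \<in> X"
    then have "x \<in> h ` {0..<N}" "y \<in> h ` {0..<N}"
      using h by (simp_all add: bij_betw_def)
    then obtain i j where ij: "i < N" "j < N" "x = h i" "y = h j"
      by auto
    then have "(\<Sum>k\<in>X. B x k * A k y) = (MB * MA) $$ (i, j)"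
      by (simp add: MA_def MB_def scalar_prod_def reindex)
    also have "\<dots> = (if i = j then 1 else 0)"
      using BA ij by simp
    also have "\<dots> = (if x = y then 1 else 0)"
      using h_inj[OF ij(1,2)] ij(3,4) by simp
    finally show "(\<Sum>k\<in>X. B x k * A k y) = (if x = y then 1 else 0)" .
  qed
qed

section \<open>Operators on the qubit register\<close>

(* Only the entries indexed by Pow {..<n} are meaningful; mmult and mvec ignore all others,
   so operator identities are stated up to vec_eq and mat_eq. *)
definition vec_eq :: "nat \<Rightarrow> qvec \<Rightarrow> qvec \<Rightarrow> bool" where
  "vec_eq n v w \<longleftrightarrow> (\<forall>S\<in>Pow {..<n}. v S = w S)"

definition mat_eq :: "nat \<Rightarrow> qmat \<Rightarrow> qmat \<Rightarrow> bool" where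
  "mat_eq n A B \<longleftrightarrow> (\<forall>S\<in>Pow {..<n}. \<forall>T\<in>Pow {..<n}. A S T = B S T)"

definition adj :: "qmat \<Rightarrow> qmat" where
  "adj U S T = cnj (U T S)"

definition scale_mat :: "complex \<Rightarrow> qmat \<Rightarrow> qmat" where
  "scale_mat c U S T = c * U S T"

lemma vec_eq_refl [simp]: "vec_eq n v v"
  by (simp add: vec_eq_def)

lemma vec_eq_sym: "vec_eq n v w \<Longrightarrow> vec_eq n w v"
  by (simp add: vec_eq_def)

lemma vec_eq_trans [trans]: "vec_eq n u v \<Longrightarrow> vec_eq n v w \<Longrightarrow> vec_eq n u w"
  by (simp add: vec_eq_def)

lemma mat_eq_refl [simp]: "mat_eq n A A"
  by (simp add: mat_eq_def)

lemma mat_eq_sym: "mat_eq n A B \<Longrightarrow> mat_eq n B A"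
  by (simp add: mat_eq_def)

lemma mat_eq_trans [trans]: "mat_eq n A B \<Longrightarrow> mat_eq n B C \<Longrightarrow> mat_eq n A C"
  by (simp add: mat_eq_def)

lemma mmult_assoc: "mmult n (mmult n A B) C = mmult n A (mmult n B C)"
  unfolding mmult_def fun_eq_iff sum_distrib_left sum_distrib_right mult.assoc
  by (auto intro: sum.swap)

lemma mvec_mmult: "mvec n (mmult n A B) v = mvec n A (mvec n B v)"
  unfolding mmult_def mvec_def fun_eq_iff sum_distrib_left sum_distrib_right mult.assoc
  by (auto intro: sum.swap)

lemma adj_mmult: "adj (mmult n A B) = mmult n (adj B) (adj A)"
  by (auto simp: fun_eq_iff adj_def mmult_def mult.commute)

lemma adj_adj [simp]: "adj (adj A) = A"
  by (simp add: fun_eq_iff adj_def)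

lemma adj_scale_mat: "adj (scale_mat c A) = scale_mat (cnj c) (adj A)"
  by (simp add: fun_eq_iff adj_def scale_mat_def)

lemma mmult_scale_mat_left: "mmult n (scale_mat c A) B = scale_mat c (mmult n A B)"
  by (simp add: fun_eq_iff scale_mat_def mmult_def sum_distrib_left mult.assoc)

lemma mmult_scale_mat_right: "mmult n A (scale_mat c B) = scale_mat c (mmult n A B)"
  by (simp add: fun_eq_iff scale_mat_def mmult_def sum_distrib_left mult.left_commute)

lemma mvec_scale_vec: "mvec n A (\<lambda>S. c * v S) = mvec n (scale_mat c A) v"
  by (simp add: fun_eq_iff scale_mat_def mvec_def mult_ac)

lemma scale_mat_scale_mat: "scale_mat c (scale_mat d A) = scale_mat (c * d) A"
  by (simp add: fun_eq_iff scale_mat_def)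

lemma scale_mat_one [simp]: "scale_mat 1 A = A"
  by (simp add: fun_eq_iff scale_mat_def)

lemma mmult_idm_left: "mat_eq n (mmult n idm A) A"
  by (simp add: mat_eq_def mmult_def idm_def if_distrib[of "\<lambda>x. x * _"] cong: if_cong)

lemma mvec_idm: "vec_eq n (mvec n idm v) v"
  by (simp add: vec_eq_def mvec_def idm_def if_distrib[of "\<lambda>x. x * _"] cong: if_cong)

lemma mmult_cong: "mat_eq n A A' \<Longrightarrow> mat_eq n B B' \<Longrightarrow> mat_eq n (mmult n A B) (mmult n A' B')"
  unfolding mat_eq_def mmult_def by (auto intro!: sum.cong)

lemma mvec_cong: "mat_eq n A A' \<Longrightarrow> vec_eq n v v' \<Longrightarrow> vec_eq n (mvec n A v) (mvec n A' v')"
  unfolding mat_eq_def vec_eq_def mvec_def by (auto intro!: sum.cong)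

lemma mvec_vec_eq: "vec_eq n v v' \<Longrightarrow> mvec n A v = mvec n A v'"
  unfolding vec_eq_def mvec_def by (auto intro!: sum.cong simp: fun_eq_iff)

lemma adj_cong: "mat_eq n A A' \<Longrightarrow> mat_eq n (adj A) (adj A')"
  unfolding mat_eq_def adj_def by auto

definition unitary :: "nat \<Rightarrow> qmat \<Rightarrow> bool" where
  "unitary n U \<longleftrightarrow> mat_eq n (mmult n U (adj U)) idm \<and> mat_eq n (mmult n (adj U) U) idm"

lemma unitary_on_imp_unitary:
  assumes "unitary_on n U"
  shows "unitary n U"
proof -
  have row: "\<forall>S\<in>Pow {..<n}. \<forall>T\<in>Pow {..<n}. (\<Sum>R\<in>Pow {..<n}. U S R * adj U R T) = (if S = T then 1 else 0)"
    using assms by (simp add: unitary_on_def adj_def idm_def)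
  then have "\<forall>S\<in>Pow {..<n}. \<forall>T\<in>Pow {..<n}. (\<Sum>R\<in>Pow {..<n}. adj U S R * U R T) = (if S = T then 1 else 0)"
    by (rule finite_index_left_right_inverse[rotated]) simp
  then show ?thesis
    using row by (simp add: unitary_def mat_eq_def mmult_def idm_def)
qed

lemma unitary_adj: "unitary n U \<Longrightarrow> unitary n (adj U)"
  by (simp add: unitary_def)

lemma unitary_idm: "unitary n idm"
proof -
  have "adj idm = idm"
    by (simp add: fun_eq_iff adj_def idm_def)
  then show ?thesis
    by (simp add: unitary_def mmult_idm_left)
qed

lemma unitary_scale_mat:
  assumes "cmod c = 1" "unitary n U"
  shows "unitary n (scale_mat c U)"
proof -
  have "cnj c * c = 1" "c * cnj c = 1"
    using assms(1) complex_norm_square[of c] by (simp_all add: complex_mult_cnj mult.commute)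
  then show ?thesis
    using assms(2)
    by (simp add: unitary_def adj_scale_mat mmult_scale_mat_left mmult_scale_mat_right scale_mat_scale_mat)
qed

lemma unitary_cancel_left:
  assumes "unitary n Z"
  shows "mat_eq n (mmult n (adj Z) (mmult n Z X)) X"
proof -
  have "mat_eq n (mmult n (mmult n (adj Z) Z) X) (mmult n idm X)"
    using assms unfolding unitary_def by (intro mmult_cong) auto
  then show ?thesis
    unfolding mmult_assoc using mmult_idm_left by (rule mat_eq_trans)
qed

lemma unitary_mmult:
  assumes "unitary n A" "unitary n B"
  shows "unitary n (mmult n A B)"
proof -
  have "mat_eq n (mmult n (adj (mmult n A B)) (mmult n A B)) (mmult n (adj B) (mmult n (adj A) (mmult n A B)))"
    by (simp add: adj_mmult mmult_assoc)
  also have "mat_eq n \<dots> (mmult n (adj B) B)"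
    using assms(1) by (intro mmult_cong unitary_cancel_left) auto
  also have "mat_eq n \<dots> idm"
    using assms(2) by (simp add: unitary_def)
  finally have left: "mat_eq n (mmult n (adj (mmult n A B)) (mmult n A B)) idm" .
  have "mat_eq n (mmult n (mmult n A B) (adj (mmult n A B))) (mmult n A (mmult n (adj (adj B)) (mmult n (adj B) (adj A))))"
    by (simp add: adj_mmult mmult_assoc)
  also have "mat_eq n \<dots> (mmult n A (adj A))"
    using unitary_adj[OF assms(2)] by (intro mmult_cong unitary_cancel_left) auto
  also have "mat_eq n \<dots> idm"
    using assms(1) by (simp add: unitary_def)
  finally show ?thesis
    using left by (simp add: unitary_def)
qed

lemma unitary_cong:
  assumes "mat_eq n A A'" "unitary n A"
  shows "unitary n A'"
proof -
  have "mat_eq n (mmult n A' (adj A')) (mmult n A (adj A))"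
    "mat_eq n (mmult n (adj A') A') (mmult n (adj A) A)"
    using mat_eq_sym[OF assms(1)] by (auto intro: mmult_cong adj_cong)
  then show ?thesis
    using assms(2) unfolding unitary_def by (auto elim: mat_eq_trans)
qed

lemma mvec_unitary_nonzero:
  assumes "unitary n U" "S \<in> Pow {..<n}" "v S \<noteq> 0"
  shows "\<exists>S'\<in>Pow {..<n}. mvec n U v S' \<noteq> 0"
proof (rule ccontr)
  assume "\<not> ?thesis"
  then have "mvec n (adj U) (mvec n U v) S = 0"
    by (simp add: mvec_def)
  moreover have "vec_eq n (mvec n (mmult n (adj U) U) v) (mvec n idm v)"
    using assms(1) unfolding unitary_def by (intro mvec_cong) auto
  then have "vec_eq n (mvec n (adj U) (mvec n U v)) v"
    unfolding mvec_mmult using mvec_idm by (rule vec_eq_trans)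
  ultimately show False
    using assms(2,3) by (simp add: vec_eq_def)
qed

section \<open>Operators acting on a subset of the qubits\<close>

definition acts_on :: "nat \<Rightarrow> nat set \<Rightarrow> qmat \<Rightarrow> bool" where
  "acts_on n Q U \<longleftrightarrow> (\<exists>w. \<forall>S\<in>Pow {..<n}. \<forall>T\<in>Pow {..<n}.
     U S T = (if S - Q = T - Q then w (S \<inter> Q) (T \<inter> Q) else 0))"

lemma acts_on_entry:
  assumes "acts_on n Q U" "S \<in> Pow {..<n}" "T \<in> Pow {..<n}"
  shows "U S T = (if S - Q = T - Q then U (S \<inter> Q) (T \<inter> Q) else 0)"
proof -
  obtain w where w: "\<forall>S\<in>Pow {..<n}. \<forall>T\<in>Pow {..<n}.
      U S T = (if S - Q = T - Q then w (S \<inter> Q) (T \<inter> Q) else 0)"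
    using assms(1) unfolding acts_on_def by blast
  have "S \<inter> Q - Q = T \<inter> Q - Q" "S \<inter> Q \<inter> Q = S \<inter> Q" "T \<inter> Q \<inter> Q = T \<inter> Q"
    by auto
  then have "U (S \<inter> Q) (T \<inter> Q) = w (S \<inter> Q) (T \<inter> Q)"
    using w assms(2,3) by (metis Pow_iff inf.coboundedI1)
  then show ?thesis
    using w assms(2,3) by auto
qed

lemma acts_on_mono:
  assumes "acts_on n Q U" "Q \<subseteq> Q'"
  shows "acts_on n Q' U"
  unfolding acts_on_def
proof (intro exI ballI)
  fix S T assume "S \<in> Pow {..<n}" "T \<in> Pow {..<n}"
  moreover have "S \<inter> Q' \<inter> Q = S \<inter> Q" "T \<inter> Q' \<inter> Q = T \<inter> Q"
    "S - Q = T - Q \<longleftrightarrow> S - Q' = T - Q' \<and> S \<inter> Q' - Q = T \<inter> Q' - Q"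
    using assms(2) by blast+
  ultimately show "U S T = (if S - Q' = T - Q' then (\<lambda>X Y. if X - Q = Y - Q then U (X \<inter> Q) (Y \<inter> Q) else 0) (S \<inter> Q') (T \<inter> Q') else 0)"
    using acts_on_entry[OF assms(1)] by auto
qed

lemma acts_on_Int_lessThan: "acts_on n Q U \<Longrightarrow> acts_on n (Q \<inter> {..<n}) U"
  unfolding acts_on_def
proof (elim exE, intro exI ballI)
  fix w S T
  assume w: "\<forall>S\<in>Pow {..<n}. \<forall>T\<in>Pow {..<n}. U S T = (if S - Q = T - Q then w (S \<inter> Q) (T \<inter> Q) else 0)"
    and S: "S \<in> Pow {..<n}" and T: "T \<in> Pow {..<n}"
  have "S - Q \<inter> {..<n} = S - Q" "T - Q \<inter> {..<n} = T - Q"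
    "S \<inter> (Q \<inter> {..<n}) = S \<inter> Q" "T \<inter> (Q \<inter> {..<n}) = T \<inter> Q"
    using S T by auto
  then show "U S T = (if S - Q \<inter> {..<n} = T - Q \<inter> {..<n} then w (S \<inter> (Q \<inter> {..<n})) (T \<inter> (Q \<inter> {..<n})) else 0)"
    using w S T by simp
qed

lemma acts_on_idm: "acts_on n Q idm"
  unfolding acts_on_def by (rule exI[of _ idm]) (auto simp: idm_def)

lemma acts_on_scale_mat: "acts_on n Q U \<Longrightarrow> acts_on n Q (scale_mat c U)"
  unfolding acts_on_def scale_mat_def by (erule exE, rule_tac x = "\<lambda>X Y. c * w X Y" in exI) auto

lemma acts_on_adj: "acts_on n Q U \<Longrightarrow> acts_on n Q (adj U)"
  unfolding acts_on_def adj_def by (erule exE, rule_tac x = "\<lambda>X Y. cnj (w Y X)" in exI) auto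

lemma acts_on_cong: "mat_eq n U U' \<Longrightarrow> acts_on n Q U \<Longrightarrow> acts_on n Q U'"
  unfolding acts_on_def mat_eq_def by metis

lemma acts_on_mmult:
  assumes U: "acts_on n Q U" and V: "acts_on n Q V"
  shows "acts_on n Q (mmult n U V)"
proof -
  let ?X = "{..<n}"
  have split: "(\<Sum>R\<in>Pow ?X. g R) = (\<Sum>r\<in>Pow (?X \<inter> Q). \<Sum>b\<in>Pow (?X - Q). g (r \<union> b))" for g
  proof -
    have "?X - ?X \<inter> Q = ?X - Q"
      by blast
    then show ?thesis
      using sum_Pow_split[of ?X "?X \<inter> Q" g] by simp
  qed
  have "mmult n U V S T = (if S - Q = T - Q then \<Sum>r\<in>Pow (?X \<inter> Q). U (S \<inter> Q) r * V r (T \<inter> Q) else 0)"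
    if S: "S \<in> Pow ?X" and T: "T \<in> Pow ?X" for S T
  proof -
    have "mmult n U V S T = (\<Sum>r\<in>Pow (?X \<inter> Q). \<Sum>b\<in>Pow (?X - Q). U S (r \<union> b) * V (r \<union> b) T)"
      unfolding mmult_def by (rule split)
    also have "\<dots> = (\<Sum>r\<in>Pow (?X \<inter> Q). U S (r \<union> (S - Q)) * V (r \<union> (S - Q)) T)"
    proof (rule sum.cong[OF refl], rule sum_eq_single)
      fix r b assume r: "r \<in> Pow (?X \<inter> Q)" and b: "b \<in> Pow (?X - Q)" "b \<noteq> S - Q"
      then have "S - Q \<noteq> r \<union> b - Q" by auto
      then show "U S (r \<union> b) * V (r \<union> b) T = 0"
        using acts_on_entry[OF U S, of "r \<union> b"] r b by auto
    qed (use S in auto)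
    also have "\<dots> = (\<Sum>r\<in>Pow (?X \<inter> Q). U (S \<inter> Q) r * (if S - Q = T - Q then V r (T \<inter> Q) else 0))"
    proof (rule sum.cong[OF refl])
      fix r assume r: "r \<in> Pow (?X \<inter> Q)"
      then have rS: "r \<union> (S - Q) \<in> Pow ?X" "(r \<union> (S - Q)) \<inter> Q = r" "r \<union> (S - Q) - Q = S - Q"
        using S by auto
      show "U S (r \<union> (S - Q)) * V (r \<union> (S - Q)) T = U (S \<inter> Q) r * (if S - Q = T - Q then V r (T \<inter> Q) else 0)"
        unfolding acts_on_entry[OF U S rS(1)] acts_on_entry[OF V rS(1) T] rS(2,3) by simp
    qed
    finally show ?thesis
      by (cases "S - Q = T - Q") simp_all
  qed
  then show ?thesis
    unfolding acts_on_def by (intro exI[of _ "\<lambda>X Y. \<Sum>r\<in>Pow (?X \<inter> Q). U X r * V r Y"]) simp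
qed

lemma mmult_disjoint_acts_on:
  assumes U: "acts_on n Q U" and V: "acts_on n Q' V" and "Q \<inter> Q' = {}"
    and S: "S \<in> Pow {..<n}" and T: "T \<in> Pow {..<n}"
  shows "mmult n U V S T = (if S - (Q \<union> Q') = T - (Q \<union> Q')
            then U (S \<inter> Q) (T \<inter> Q) * V (S \<inter> Q') (T \<inter> Q') else 0)"
proof -
  define R0 where "R0 = (T \<inter> Q) \<union> (S - Q)"
  have R0: "R0 \<in> Pow {..<n}" "R0 - Q = S - Q" "R0 \<inter> Q = T \<inter> Q" "R0 \<inter> Q' = S \<inter> Q'"
    "(R0 - Q' = T - Q') = (S - (Q \<union> Q') = T - (Q \<union> Q'))"
    using S T assms(3) unfolding R0_def by blast+
  have "mmult n U V S T = U S R0 * V R0 T"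
    unfolding mmult_def
  proof (rule sum_eq_single)
    fix R assume R: "R \<in> Pow {..<n}" "R \<noteq> R0"
    have "\<not> (S - Q = R - Q \<and> R - Q' = T - Q')"
      using R(2) assms(3) unfolding R0_def by blast
    then show "U S R * V R T = 0"
      unfolding acts_on_entry[OF U S R(1)] acts_on_entry[OF V R(1) T] by auto
  qed (use R0(1) in simp_all)
  then show ?thesis
    unfolding acts_on_entry[OF U S R0(1)] acts_on_entry[OF V R0(1) T] R0(2-5) by simp
qed

lemma acts_on_disjoint_commute:
  assumes "acts_on n Q U" "acts_on n Q' V" "Q \<inter> Q' = {}"
  shows "mat_eq n (mmult n U V) (mmult n V U)"
  unfolding mat_eq_def
  using mmult_disjoint_acts_on[OF assms] mmult_disjoint_acts_on[OF assms(2,1)] assms(3)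
  by (simp add: Un_commute Int_commute mult.commute)

lemma mvec_disjoint_commute:
  assumes "acts_on n Q U" "acts_on n Q' V" "Q \<inter> Q' = {}"
  shows "vec_eq n (mvec n U (mvec n V v)) (mvec n V (mvec n U v))"
  using mvec_cong[OF acts_on_disjoint_commute[OF assms] vec_eq_refl, of v] by (simp add: mvec_mmult)

lemma acts_on_pair_imp_acts_on:
  assumes "acts_on_pair n U t"
  shows "acts_on n {t, Suc t} U"
proof -
  obtain w where w: "\<forall>S\<in>Pow {..<n}. \<forall>T\<in>Pow {..<n}. U S T = (if S - {t, Suc t} = T - {t, Suc t}
      then w (t \<in> S) (Suc t \<in> S) (t \<in> T) (Suc t \<in> T) else 0)"
    using assms unfolding acts_on_pair_def by blast
  show ?thesis
    unfolding acts_on_def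
    by (rule exI[of _ "\<lambda>X Y. w (t \<in> X) (Suc t \<in> X) (t \<in> Y) (Suc t \<in> Y)"]) (simp add: w)
qed

lemma acts_on_block_entry:
  assumes "acts_on n Q V" "Q \<subseteq> {..<n}"
    and "a \<in> Pow Q" "r \<in> Pow Q" "b \<in> Pow ({..<n} - Q)" "b' \<in> Pow ({..<n} - Q)"
  shows "V (a \<union> b) (r \<union> b') = (if b = b' then V a r else 0)"
proof -
  have S: "a \<union> b \<in> Pow {..<n}" "r \<union> b' \<in> Pow {..<n}"
    using assms(2-6) by auto
  have "a \<union> b - Q = b" "r \<union> b' - Q = b'" "(a \<union> b) \<inter> Q = a" "(r \<union> b') \<inter> Q = r"
    using assms(3-6) by auto
  then show ?thesis
    by (simp only: acts_on_entry[OF assms(1) S])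
qed

lemma mvec_acts_on_block:
  assumes "acts_on n Q V" "Q \<subseteq> {..<n}" "a \<in> Pow Q" "b \<in> Pow ({..<n} - Q)"
  shows "mvec n V p (a \<union> b) = (\<Sum>r\<in>Pow Q. V a r * p (r \<union> b))"
proof -
  have "mvec n V p (a \<union> b) = (\<Sum>r\<in>Pow Q. \<Sum>b'\<in>Pow ({..<n} - Q). V (a \<union> b) (r \<union> b') * p (r \<union> b'))"
    unfolding mvec_def using assms(2) by (rule sum_Pow_split[OF finite_lessThan])
  also have "\<dots> = (\<Sum>r\<in>Pow Q. V a r * p (r \<union> b))"
  proof (rule sum.cong[OF refl])
    fix r assume r: "r \<in> Pow Q"
    have "(\<Sum>b'\<in>Pow ({..<n} - Q). V (a \<union> b) (r \<union> b') * p (r \<union> b')) = V (a \<union> b) (r \<union> b) * p (r \<union> b)"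
      using acts_on_block_entry[OF assms(1,2,3) r assms(4)] assms(4) by (intro sum_eq_single) auto
    then show "(\<Sum>b'\<in>Pow ({..<n} - Q). V (a \<union> b) (r \<union> b') * p (r \<union> b')) = V a r * p (r \<union> b)"
      using acts_on_block_entry[OF assms(1,2,3) r assms(4,4)] by simp
  qed
  finally show ?thesis .
qed

lemma unitary_acts_on_block:
  assumes "unitary n V" "acts_on n Q V" "Q \<subseteq> {..<n}" "r \<in> Pow Q" "r' \<in> Pow Q"
  shows "(\<Sum>a\<in>Pow Q. cnj (V a r) * V a r') = idm r r'"
proof -
  have V: "V (a \<union> b) t = (if b = {} then V a t else 0)"
    if "a \<in> Pow Q" "b \<in> Pow ({..<n} - Q)" "t \<in> Pow Q" for a b t
    using acts_on_block_entry[OF assms(2,3) that(1,3,2), of "{}"] by (simp add: eq_commute)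
  have "idm r r' = (\<Sum>R\<in>Pow {..<n}. cnj (V R r) * V R r')"
    using assms(1,3-5) unfolding unitary_def mat_eq_def mmult_def adj_def by auto
  also have "\<dots> = (\<Sum>a\<in>Pow Q. \<Sum>b\<in>Pow ({..<n} - Q). cnj (V (a \<union> b) r) * V (a \<union> b) r')"
    by (rule sum_Pow_split[OF finite_lessThan assms(3)])
  also have "\<dots> = (\<Sum>a\<in>Pow Q. cnj (V (a \<union> {}) r) * V (a \<union> {}) r')"
    using V assms(4,5) by (intro sum.cong refl sum_eq_single) auto
  finally show ?thesis
    by simp
qed

section \<open>The circuit\<close>

fun gate_seq :: "nat \<Rightarrow> (nat \<Rightarrow> qmat) \<Rightarrow> nat \<Rightarrow> nat \<Rightarrow> qmat" where
  "gate_seq n u s 0 = idm"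
| "gate_seq n u s (Suc k) = mmult n (u (s + k)) (gate_seq n u s k)"

lemma Uprod_eq_gate_seq: "Uprod n u t = gate_seq n u 0 t"
  by (induction t) auto

lemma gate_seq_add:
  "mat_eq n (gate_seq n u s (k + l)) (mmult n (gate_seq n u (s + k) l) (gate_seq n u s k))"
proof (induction l)
  case 0
  then show ?case
    using mat_eq_sym[OF mmult_idm_left] by simp
next
  case (Suc l)
  have "mat_eq n (gate_seq n u s (k + Suc l)) (mmult n (u (s + k + l)) (mmult n (gate_seq n u (s + k) l) (gate_seq n u s k)))"
    using Suc.IH by (simp add: add.assoc mmult_cong)
  then show ?case
    by (simp add: mmult_assoc)
qed

definition Ulist :: "nat \<Rightarrow> (nat \<Rightarrow> qmat) \<Rightarrow> nat list \<Rightarrow> qmat" where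
  "Ulist n u ts = foldr (\<lambda>t M. mmult n (Uprod n u t) M) ts idm"

lemma Ulist_Nil [simp]: "Ulist n u [] = idm"
  by (simp add: Ulist_def)

lemma Ulist_Cons [simp]: "Ulist n u (t # ts) = mmult n (Uprod n u t) (Ulist n u ts)"
  by (simp add: Ulist_def)

lemma Ulist_append: "mat_eq n (Ulist n u (xs @ ys)) (mmult n (Ulist n u xs) (Ulist n u ys))"
proof (induction xs)
  case Nil
  then show ?case
    using mat_eq_sym[OF mmult_idm_left] by simp
next
  case (Cons x xs)
  then show ?case
    by (simp add: mmult_cong mmult_assoc)
qed

lemma UT_eq_Ulist: "vec_eq n (UT n u F v) (mvec n (Ulist n u (sorted_list_of_set F)) v)"
proof -
  have "vec_eq n (foldr (\<lambda>t w. mvec n (Uprod n u t) w) ts v) (mvec n (Ulist n u ts) v)" for ts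
  proof (induction ts)
    case Nil
    then show ?case
      using vec_eq_sym[OF mvec_idm] by simp
  next
    case (Cons t ts)
    then show ?case
      by (simp add: mvec_mmult mvec_vec_eq)
  qed
  then show ?thesis
    by (simp add: UT_def)
qed

locale clock_circuit =
  fixes n :: nat and u :: "nat \<Rightarrow> qmat" and c :: complex
  assumes gates: "\<forall>t < n - 1. unitary_on n (u t) \<and> acts_on_pair n (u t) t"
    and cmod_c: "cmod c = 1"
    and last_gate: "\<forall>S\<in>Pow {..<n}. \<forall>T\<in>Pow {..<n}. u (n - 1) S T = c * idm S T"
begin

lemma last_gate_eq: "mat_eq n (scale_mat c idm) (u (n - 1))"
  using last_gate by (simp add: mat_eq_def scale_mat_def)

lemma gate_unitary:
  assumes "t < n"
  shows "unitary n (u t)"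
proof (cases "t < n - 1")
  case True
  then show ?thesis
    using gates unitary_on_imp_unitary by blast
next
  case False
  then have "t = n - 1"
    using assms by simp
  then show ?thesis
    using unitary_cong[OF last_gate_eq unitary_scale_mat[OF cmod_c unitary_idm]] by simp
qed

lemma gate_acts_on:
  assumes "t < n"
  shows "acts_on n {t, Suc t} (u t)"
proof (cases "t < n - 1")
  case True
  then show ?thesis
    using gates acts_on_pair_imp_acts_on by blast
next
  case False
  then have "t = n - 1"
    using assms by simp
  then show ?thesis
    using acts_on_cong[OF last_gate_eq acts_on_scale_mat[OF acts_on_idm]] by simp
qed

lemma gate_seq_acts_on: "s + k \<le> n \<Longrightarrow> acts_on n {s..s + k} (gate_seq n u s k)"
proof (induction k)
  case 0
  then show ?case
    by (simp add: acts_on_idm)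
next
  case (Suc k)
  have "acts_on n {s..s + Suc k} (u (s + k))"
    using gate_acts_on[of "s + k"] Suc.prems by (rule_tac acts_on_mono) auto
  moreover have "acts_on n {s..s + Suc k} (gate_seq n u s k)"
    using Suc by (rule_tac acts_on_mono) auto
  ultimately show ?case
    by (simp add: acts_on_mmult)
qed

lemma gate_seq_unitary: "s + k \<le> n \<Longrightarrow> unitary n (gate_seq n u s k)"
  by (induction k) (auto simp: unitary_idm unitary_mmult gate_unitary)

lemma Uprod_acts_on: "t \<le> n \<Longrightarrow> acts_on n {..t} (Uprod n u t)"
  using gate_seq_acts_on[of 0 t] by (simp add: Uprod_eq_gate_seq atLeast0AtMost)

lemma Uprod_unitary: "t \<le> n \<Longrightarrow> unitary n (Uprod n u t)"
  using gate_seq_unitary[of 0 t] by (simp add: Uprod_eq_gate_seq)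

lemma Ulist_acts_on: "\<forall>t\<in>set ts. t < m \<Longrightarrow> m \<le> n \<Longrightarrow> acts_on n {..<m} (Ulist n u ts)"
proof (induction ts)
  case (Cons t ts)
  then have "acts_on n {..<m} (Uprod n u t)"
    using Uprod_acts_on[of t] by (rule_tac acts_on_mono) auto
  then show ?case
    using Cons by (simp add: acts_on_mmult)
qed (simp add: acts_on_idm)

lemma Ulist_unitary: "\<forall>t\<in>set ts. t \<le> n \<Longrightarrow> unitary n (Ulist n u ts)"
  by (induction ts) (auto simp: unitary_idm unitary_mmult Uprod_unitary)

end

lemma sorted_list_of_set_Un_less:
  fixes A B :: "'a::linorder set"
  assumes "finite A" "finite B" "\<forall>a\<in>A. \<forall>b\<in>B. a < b"
  shows "sorted_list_of_set (A \<union> B) = sorted_list_of_set A @ sorted_list_of_set B"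
  using assms by (intro strict_sorted_equal) (auto simp: sorted_wrt_append)

locale clock_eigvec = clock_circuit +
  fixes phi :: qvec and lam :: complex
  assumes cmod_lam: "cmod lam = 1"
    and eigvec: "vec_eq n (mvec n (Uprod n u n) phi) (\<lambda>S. lam * phi S)"
begin

(* U_{n:0} = Z U_{r:0}, so on the eigenvector phi the operator U_{r:0} acts as lam Z^dagger. *)
lemma Uprod_absorb_right:
  assumes "r < n" and W: "acts_on n {Suc r..<n} W"
  defines "Z \<equiv> gate_seq n u r (n - r)"
  shows "vec_eq n (mvec n (mmult n (Uprod n u r) W) phi) (mvec n (scale_mat lam (mmult n W (adj Z))) phi)"
proof -
  have "mat_eq n (mmult n (Uprod n u r) W) (mmult n W (Uprod n u r))"
    using Uprod_acts_on[of r] W assms(1) by (intro acts_on_disjoint_commute) auto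
  also have "mat_eq n \<dots> (mmult n W (mmult n (adj Z) (mmult n Z (Uprod n u r))))"
    using gate_seq_unitary[of r "n - r"] assms(1) unfolding Z_def
    by (intro mmult_cong mat_eq_sym[OF unitary_cancel_left]) auto
  also have "mat_eq n \<dots> (mmult n (mmult n W (adj Z)) (Uprod n u n))"
    using mat_eq_sym[OF gate_seq_add[of n u 0 r "n - r"]] assms(1)
    unfolding Z_def Uprod_eq_gate_seq mmult_assoc by (intro mmult_cong) auto
  finally have "vec_eq n (mvec n (mmult n (Uprod n u r) W) phi) (mvec n (mmult n (mmult n W (adj Z)) (Uprod n u n)) phi)"
    by (rule mvec_cong) simp
  also have "mvec n (mmult n (mmult n W (adj Z)) (Uprod n u n)) phi = mvec n (scale_mat lam (mmult n W (adj Z))) phi"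
    by (subst mvec_mmult) (simp add: mvec_vec_eq[OF eigvec] mvec_scale_vec)
  finally show ?thesis .
qed

lemma Ulist_absorb_right:
  "sorted_wrt (<) rs \<Longrightarrow> \<forall>r\<in>set rs. m \<le> r \<and> r < n \<Longrightarrow>
    \<exists>W. unitary n W \<and> acts_on n {m..<n} W \<and> vec_eq n (mvec n (Ulist n u rs) phi) (mvec n W phi)"
proof (induction rs arbitrary: m)
  case Nil
  show ?case
    by (intro exI[of _ idm]) (simp add: unitary_idm acts_on_idm)
next
  case (Cons r rs)
  have r: "m \<le> r" "r < n"
    using Cons.prems by auto
  have "\<exists>W. unitary n W \<and> acts_on n {Suc r..<n} W \<and> vec_eq n (mvec n (Ulist n u rs) phi) (mvec n W phi)"
    by (rule Cons.IH) (use Cons.prems in auto)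
  then obtain W where W: "unitary n W" "acts_on n {Suc r..<n} W" "vec_eq n (mvec n (Ulist n u rs) phi) (mvec n W phi)"
    by blast
  define Z where "Z = gate_seq n u r (n - r)"
  have "unitary n (scale_mat lam (mmult n W (adj Z)))"
    using gate_seq_unitary[of r "n - r"] r(2) unfolding Z_def
    by (intro unitary_scale_mat cmod_lam unitary_mmult W(1) unitary_adj) simp
  moreover have "acts_on n {m..<n} (scale_mat lam (mmult n W (adj Z)))"
  proof -
    have "acts_on n {r..r + (n - r)} Z"
      unfolding Z_def using r(2) by (intro gate_seq_acts_on) simp
    then have "acts_on n ({r..r + (n - r)} \<inter> {..<n}) Z"
      by (rule acts_on_Int_lessThan)
    moreover have "{r..r + (n - r)} \<inter> {..<n} \<subseteq> {m..<n}"
      using r by auto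
    ultimately show ?thesis
      using W(2) r(1)
      by (intro acts_on_scale_mat acts_on_mmult acts_on_adj) (auto elim!: acts_on_mono)
  qed
  moreover have "vec_eq n (mvec n (Ulist n u (r # rs)) phi) (mvec n (scale_mat lam (mmult n W (adj Z))) phi)"
    using Uprod_absorb_right[OF r(2) W(2)] mvec_vec_eq[OF W(3)]
    by (simp add: mvec_mmult Z_def)
  ultimately show ?case
    by blast
qed

(* U_{x:0} = E U_{s:0} with E supported on [s, x], and U_{s:0} commutes with everything
   supported on (s, q); this moves the times of xs down to s, s + 1, ... *)
lemma Ulist_compress:
  "sorted_wrt (<) xs \<Longrightarrow> \<forall>x\<in>set xs. s \<le> x \<and> x < q \<Longrightarrow> q \<le> n \<Longrightarrow>
    \<exists>V. unitary n V \<and> acts_on n {s..<q} V \<and> mat_eq n (Ulist n u xs) (mmult n V (Ulist n u [s..<s + length xs]))"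
proof (induction xs arbitrary: s)
  case Nil
  show ?case
    using mat_eq_sym[OF mmult_idm_left] by (intro exI[of _ idm]) (simp add: unitary_idm acts_on_idm)
next
  case (Cons x xs)
  have x: "s \<le> x" "x < q"
    using Cons.prems by auto
  have "\<exists>V. unitary n V \<and> acts_on n {Suc s..<q} V \<and>
      mat_eq n (Ulist n u xs) (mmult n V (Ulist n u [Suc s..<Suc s + length xs]))"
    by (rule Cons.IH) (use Cons.prems in auto)
  then obtain V where V: "unitary n V" "acts_on n {Suc s..<q} V"
    "mat_eq n (Ulist n u xs) (mmult n V (Ulist n u [Suc s..<Suc s + length xs]))"
    by blast
  define E where "E = gate_seq n u s (x - s)"
  have E: "unitary n E" "acts_on n {s..<q} E"
    using gate_seq_unitary[of s "x - s"] gate_seq_acts_on[of s "x - s"] x Cons.prems(3)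
    unfolding E_def by (auto elim!: acts_on_mono)
  have Ux: "mat_eq n (Uprod n u x) (mmult n E (Uprod n u s))"
    using gate_seq_add[of n u 0 s "x - s"] x unfolding E_def Uprod_eq_gate_seq by simp
  have commute: "mat_eq n (mmult n (Uprod n u s) V) (mmult n V (Uprod n u s))"
    using Uprod_acts_on[of s] V(2) x Cons.prems(3) by (intro acts_on_disjoint_commute) auto
  define Rest where "Rest = Ulist n u [Suc s..<Suc s + length xs]"
  have "mat_eq n (Ulist n u (x # xs)) (mmult n (mmult n E (Uprod n u s)) (mmult n V Rest))"
    using Ux V(3) unfolding Rest_def by (simp add: mmult_cong)
  also have "mat_eq n \<dots> (mmult n (mmult n E V) (mmult n (Uprod n u s) Rest))"
  proof -
    have "mat_eq n (mmult n E (mmult n (mmult n (Uprod n u s) V) Rest)) (mmult n E (mmult n (mmult n V (Uprod n u s)) Rest))"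
      using commute by (intro mmult_cong[OF mat_eq_refl mmult_cong[OF _ mat_eq_refl]])
    then show ?thesis
      by (simp only: mmult_assoc)
  qed
  also have "mmult n (Uprod n u s) Rest = Ulist n u [s..<s + length (x # xs)]"
  proof -
    have "[s..<s + length (x # xs)] = s # [Suc s..<Suc s + length xs]"
      by (subst upt_conv_Cons) auto
    then show ?thesis
      unfolding Rest_def by simp
  qed
  finally have "mat_eq n (Ulist n u (x # xs)) (mmult n (mmult n E V) (Ulist n u [s..<s + length (x # xs)]))" .
  moreover have "acts_on n {s..<q} V"
    using V(2) by (rule acts_on_mono) auto
  ultimately show ?case
    using E V(1) by (intro exI[of _ "mmult n E V"]) (simp add: unitary_mmult acts_on_mmult)
qed

lemma UT_factorisation:
  assumes "p \<le> q" "q \<le> n"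
  obtains V W where
    "\<forall>x\<in>Pow {p..<q}. unitary n (V x) \<and> acts_on n {p..<q} (V x)"
    "\<forall>y\<in>Pow ({..<n} - {p..<q}). unitary n (W y) \<and> acts_on n ({..<n} - {p..<q}) (W y)"
    "\<forall>F\<in>Pow {..<n}. vec_eq n (UT n u F phi)
       (mvec n (V (F \<inter> {p..<q})) (mvec n (W (F - {p..<q})) (UT n u {p..<p + card (F \<inter> {p..<q})} phi)))"
proof -
  let ?X = "{p..<q}"
  have "\<forall>x\<in>Pow ?X. \<exists>V. unitary n V \<and> acts_on n ?X V \<and>
      mat_eq n (Ulist n u (sorted_list_of_set x)) (mmult n V (Ulist n u [p..<p + card x]))"
  proof
    fix x assume "x \<in> Pow ?X"
    then have "finite x" "x \<subseteq> ?X"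
      by (auto intro: finite_subset)
    then show "\<exists>V. unitary n V \<and> acts_on n ?X V \<and>
        mat_eq n (Ulist n u (sorted_list_of_set x)) (mmult n V (Ulist n u [p..<p + card x]))"
      using Ulist_compress[of "sorted_list_of_set x" p q] assms(2) by (simp add: subset_iff)
  qed
  from bchoice[OF this] obtain V where V: "\<forall>x\<in>Pow ?X. unitary n (V x) \<and> acts_on n ?X (V x) \<and>
      mat_eq n (Ulist n u (sorted_list_of_set x)) (mmult n (V x) (Ulist n u [p..<p + card x]))"
    by blast
  have "\<forall>y\<in>Pow {q..<n}. \<exists>R. unitary n R \<and> acts_on n {q..<n} R \<and>
      vec_eq n (mvec n (Ulist n u (sorted_list_of_set y)) phi) (mvec n R phi)"
  proof
    fix y assume "y \<in> Pow {q..<n}"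
    then have "finite y" "y \<subseteq> {q..<n}"
      by (auto intro: finite_subset)
    then show "\<exists>R. unitary n R \<and> acts_on n {q..<n} R \<and>
        vec_eq n (mvec n (Ulist n u (sorted_list_of_set y)) phi) (mvec n R phi)"
      using Ulist_absorb_right[of "sorted_list_of_set y" q] by (simp add: subset_iff)
  qed
  from bchoice[OF this] obtain R where R: "\<forall>y\<in>Pow {q..<n}. unitary n (R y) \<and> acts_on n {q..<n} (R y) \<and>
      vec_eq n (mvec n (Ulist n u (sorted_list_of_set y)) phi) (mvec n (R y) phi)"
    by blast
  define W where "W y = mmult n (Ulist n u (sorted_list_of_set (y \<inter> {..<p}))) (R (y \<inter> {q..<n}))" for y
  have W: "unitary n (W y) \<and> acts_on n ({..<n} - ?X) (W y)" for y
  proof -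
    have "acts_on n ({..<n} - ?X) (Ulist n u (sorted_list_of_set (y \<inter> {..<p})))"
      using assms by (intro acts_on_mono[OF Ulist_acts_on[of _ p]]) auto
    moreover have "acts_on n {q..<n} (R (y \<inter> {q..<n}))"
      using R by blast
    then have "acts_on n ({..<n} - ?X) (R (y \<inter> {q..<n}))"
      by (rule acts_on_mono) auto
    moreover have "unitary n (Ulist n u (sorted_list_of_set (y \<inter> {..<p})))"
      using assms by (intro Ulist_unitary) auto
    ultimately show ?thesis
      using R unfolding W_def by (simp add: unitary_mmult acts_on_mmult)
  qed
  have factor: "vec_eq n (UT n u F phi)
       (mvec n (V (F \<inter> ?X)) (mvec n (W (F - ?X)) (UT n u {p..<p + card (F \<inter> ?X)} phi)))"
    if F: "F \<in> Pow {..<n}" for F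
  proof -
    define UL where "UL = Ulist n u (sorted_list_of_set (F \<inter> {..<p}))"
    define UX where "UX = Ulist n u (sorted_list_of_set (F \<inter> ?X))"
    define UR where "UR = Ulist n u (sorted_list_of_set (F \<inter> {q..<n}))"
    define Rest where "Rest = Ulist n u [p..<p + card (F \<inter> ?X)]"
    have UL: "acts_on n {..<p} UL" and UX: "acts_on n {..<q} UX"
      using assms unfolding UL_def UX_def by (auto intro!: Ulist_acts_on)
    have R_F: "unitary n (R (F \<inter> {q..<n}))" "acts_on n {q..<n} (R (F \<inter> {q..<n}))"
      "vec_eq n (mvec n UR phi) (mvec n (R (F \<inter> {q..<n})) phi)"
      using R unfolding UR_def by auto
    have V_F: "acts_on n ?X (V (F \<inter> ?X))" "mat_eq n UX (mmult n (V (F \<inter> ?X)) Rest)"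
      using V unfolding UX_def Rest_def by auto
    have UX_phi: "vec_eq n (mvec n UX phi) (mvec n (V (F \<inter> ?X)) (mvec n Rest phi))"
      unfolding mvec_mmult[symmetric] using V_F(2) by (rule mvec_cong) simp
    have "F = (F \<inter> {..<p}) \<union> ((F \<inter> ?X) \<union> (F \<inter> {q..<n}))"
      using F assms by auto
    also have "sorted_list_of_set \<dots>
        = sorted_list_of_set (F \<inter> {..<p}) @ sorted_list_of_set ((F \<inter> ?X) \<union> (F \<inter> {q..<n}))"
      using assms(1) by (intro sorted_list_of_set_Un_less) auto
    also have "sorted_list_of_set ((F \<inter> ?X) \<union> (F \<inter> {q..<n}))
        = sorted_list_of_set (F \<inter> ?X) @ sorted_list_of_set (F \<inter> {q..<n})"
      by (intro sorted_list_of_set_Un_less) auto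
    finally have "mat_eq n (Ulist n u (sorted_list_of_set F)) (mmult n UL (Ulist n u
        (sorted_list_of_set (F \<inter> ?X) @ sorted_list_of_set (F \<inter> {q..<n}))))"
      unfolding UL_def by (simp add: Ulist_append)
    also have "mat_eq n \<dots> (mmult n UL (mmult n UX UR))"
      unfolding UX_def UR_def by (intro mmult_cong[OF mat_eq_refl Ulist_append])
    finally have "vec_eq n (mvec n (Ulist n u (sorted_list_of_set F)) phi) (mvec n (mmult n UL (mmult n UX UR)) phi)"
      by (rule mvec_cong) simp
    with UT_eq_Ulist have "vec_eq n (UT n u F phi) (mvec n UL (mvec n UX (mvec n UR phi)))"
      unfolding mvec_mmult by (rule vec_eq_trans)
    also have "mvec n UL (mvec n UX (mvec n UR phi)) = mvec n UL (mvec n UX (mvec n (R (F \<inter> {q..<n})) phi))"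
      using R_F(3) by (simp add: mvec_vec_eq)
    also have "vec_eq n \<dots> (mvec n UL (mvec n (R (F \<inter> {q..<n})) (mvec n UX phi)))"
      by (intro mvec_cong[OF mat_eq_refl] mvec_disjoint_commute[OF UX R_F(2)]) auto
    also have "\<dots> = mvec n UL (mvec n (R (F \<inter> {q..<n})) (mvec n (V (F \<inter> ?X)) (mvec n Rest phi)))"
      using UX_phi by (simp add: mvec_vec_eq)
    also have "\<dots> = mvec n UL (mvec n (V (F \<inter> ?X)) (mvec n (R (F \<inter> {q..<n})) (mvec n Rest phi)))"
      by (intro mvec_vec_eq arg_cong[where f = "mvec n UL"] mvec_disjoint_commute[OF R_F(2) V_F(1)]) auto
    also have "vec_eq n \<dots> (mvec n (V (F \<inter> ?X)) (mvec n UL (mvec n (R (F \<inter> {q..<n})) (mvec n Rest phi))))"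
      by (intro mvec_disjoint_commute[OF UL V_F(1)]) auto
    also have "mvec n UL (mvec n (R (F \<inter> {q..<n})) (mvec n Rest phi)) = mvec n (W (F - ?X)) (mvec n Rest phi)"
    proof -
      have "(F - ?X) \<inter> {..<p} = F \<inter> {..<p}" "(F - ?X) \<inter> {q..<n} = F \<inter> {q..<n}"
        by auto
      then show ?thesis
        by (simp add: W_def UL_def mvec_mmult)
    qed
    also have "mvec n (W (F - ?X)) (mvec n Rest phi) = mvec n (W (F - ?X)) (UT n u {p..<p + card (F \<inter> ?X)} phi)"
      using UT_eq_Ulist[of n u "{p..<p + card (F \<inter> ?X)}" phi]
      by (simp add: Rest_def mvec_vec_eq vec_eq_sym)
    finally show ?thesis .
  qed
  show ?thesis
  proof (rule that)
    show "\<forall>x\<in>Pow ?X. unitary n (V x) \<and> acts_on n ?X (V x)"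
      using V by blast
    show "\<forall>y\<in>Pow ({..<n} - ?X). unitary n (W y) \<and> acts_on n ({..<n} - ?X) (W y)"
      using W by blast
    show "\<forall>F\<in>Pow {..<n}. vec_eq n (UT n u F phi)
       (mvec n (V (F \<inter> ?X)) (mvec n (W (F - ?X)) (UT n u {p..<p + card (F \<inter> ?X)} phi)))"
      using factor by blast
  qed
qed

end

section \<open>Reduced density matrices and purity\<close>

(* Tr ((M M^dagger)^2) for the coefficient matrix M x y = f x y of a bipartite pure state. *)
definition bipartite_purity :: "'a set \<Rightarrow> 'b set \<Rightarrow> ('a \<Rightarrow> 'b \<Rightarrow> complex) \<Rightarrow> real" where
  "bipartite_purity X Y f = Re (\<Sum>x\<in>X. \<Sum>x'\<in>X. \<Sum>y\<in>Y. \<Sum>y'\<in>Y.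
     f x y * cnj (f x' y) * f x' y' * cnj (f x y'))"

lemma bipartite_purity_eq_sum_norm:
  "bipartite_purity X Y f = (\<Sum>x\<in>X. \<Sum>x'\<in>X. (cmod (\<Sum>y\<in>Y. f x y * cnj (f x' y)))\<^sup>2)"
proof -
  have "(\<Sum>y\<in>Y. \<Sum>y'\<in>Y. f x y * cnj (f x' y) * f x' y' * cnj (f x y'))
      = complex_of_real ((cmod (\<Sum>y\<in>Y. f x y * cnj (f x' y)))\<^sup>2)" for x x'
    unfolding complex_norm_square cnj_sum sum_product by (intro sum.cong refl) (simp add: mult_ac)
  then show ?thesis
    unfolding bipartite_purity_def by (simp flip: of_real_sum)
qed

lemma bipartite_purity_nonneg: "0 \<le> bipartite_purity X Y f"
  unfolding bipartite_purity_eq_sum_norm by (intro sum_nonneg) simp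

lemma bipartite_purity_swap: "bipartite_purity X Y f = bipartite_purity Y X (\<lambda>y x. f x y)"
proof -
  have swap: "(\<Sum>x\<in>X. \<Sum>x'\<in>X. \<Sum>y\<in>Y. \<Sum>y'\<in>Y. g x x' y y') = (\<Sum>y\<in>Y. \<Sum>y'\<in>Y. \<Sum>x\<in>X. \<Sum>x'\<in>X. g x x' y y')"
    for g :: "_ \<Rightarrow> _ \<Rightarrow> _ \<Rightarrow> _ \<Rightarrow> complex"
  proof -
    have "(\<Sum>x\<in>X. \<Sum>x'\<in>X. \<Sum>y\<in>Y. \<Sum>y'\<in>Y. g x x' y y') = (\<Sum>x\<in>X. \<Sum>y\<in>Y. \<Sum>y'\<in>Y. \<Sum>x'\<in>X. g x x' y y')"
      by (intro sum.cong refl) (subst sum.swap, intro sum.cong refl sum.swap)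
    also have "\<dots> = (\<Sum>y\<in>Y. \<Sum>y'\<in>Y. \<Sum>x\<in>X. \<Sum>x'\<in>X. g x x' y y')"
      by (subst sum.swap, intro sum.cong refl sum.swap)
    finally show ?thesis .
  qed
  show ?thesis
    unfolding bipartite_purity_def swap by (simp add: mult_ac)
qed

lemma purity_eq_bipartite:
  "purity n A p = bipartite_purity (Pow A) (Pow ({..<n} - A)) (\<lambda>a b. p (a \<union> b))"
  by (simp add: purity_def bipartite_purity_def)

lemma purity_joint_eq_bipartite:
  "purity_joint n A \<Psi> = bipartite_purity (Pow A \<times> Pow A) (Pow ({..<n} - A) \<times> Pow ({..<n} - A))
     (\<lambda>(aq, af) (bq, bf). \<Psi> (aq \<union> bq) (af \<union> bf))"
  by (simp add: purity_joint_def bipartite_purity_def sum.cartesian_product')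

lemma purity_joint_eq_sum_norm:
  "purity_joint n A \<Psi> = (\<Sum>aq\<in>Pow A. \<Sum>af\<in>Pow A. \<Sum>aq'\<in>Pow A. \<Sum>af'\<in>Pow A.
     (cmod (\<Sum>bq\<in>Pow ({..<n} - A). \<Sum>bf\<in>Pow ({..<n} - A).
       \<Psi> (aq \<union> bq) (af \<union> bf) * cnj (\<Psi> (aq' \<union> bq) (af' \<union> bf))))\<^sup>2)"
  by (simp add: purity_joint_eq_bipartite bipartite_purity_eq_sum_norm sum.cartesian_product')

lemma purity_compl:
  assumes "A \<subseteq> {..<n}"
  shows "purity n ({..<n} - A) p = purity n A p"
proof -
  have "{..<n} - ({..<n} - A) = A"
    using assms by blast
  then show ?thesis
    unfolding purity_eq_bipartite by (subst bipartite_purity_swap) (simp add: Un_commute)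
qed

lemma purity_joint_compl:
  assumes "A \<subseteq> {..<n}"
  shows "purity_joint n ({..<n} - A) \<Psi> = purity_joint n A \<Psi>"
proof -
  have "{..<n} - ({..<n} - A) = A"
    using assms by blast
  then show ?thesis
    unfolding purity_joint_eq_bipartite by (subst bipartite_purity_swap) (simp add: Un_commute case_prod_unfold)
qed

lemma renyi2_compl: "A \<subseteq> {..<n} \<Longrightarrow> renyi2 n ({..<n} - A) p = renyi2 n A p"
  by (simp add: renyi2_def purity_compl)

lemma renyi2_joint_compl: "A \<subseteq> {..<n} \<Longrightarrow> renyi2_joint n ({..<n} - A) \<Psi> = renyi2_joint n A \<Psi>"
  by (simp add: renyi2_joint_def purity_joint_compl)

definition rdm :: "nat \<Rightarrow> nat set \<Rightarrow> qvec \<Rightarrow> qvec \<Rightarrow> nat set \<Rightarrow> nat set \<Rightarrow> complex" where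
  "rdm n A p1 p2 a a' = (\<Sum>b\<in>Pow ({..<n} - A). p1 (a \<union> b) * cnj (p2 (a' \<union> b)))"

lemma purity_eq_sum_rdm: "purity n A p = (\<Sum>a\<in>Pow A. \<Sum>a'\<in>Pow A. (cmod (rdm n A p p a a'))\<^sup>2)"
  by (simp add: purity_eq_bipartite bipartite_purity_eq_sum_norm rdm_def)

lemma purity_nonneg: "0 \<le> purity n A p"
  by (simp add: purity_eq_bipartite bipartite_purity_nonneg)

lemma rdm_diag: "rdm n A p p a a = complex_of_real (\<Sum>b\<in>Pow ({..<n} - A). (cmod (p (a \<union> b)))\<^sup>2)"
  unfolding rdm_def of_real_sum complex_norm_square ..

lemma rdm_vec_eq:
  assumes "A \<subseteq> {..<n}" "vec_eq n p1 p1'" "vec_eq n p2 p2'" "a \<in> Pow A" "a' \<in> Pow A"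
  shows "rdm n A p1 p2 a a' = rdm n A p1' p2' a a'"
  unfolding rdm_def
proof (rule sum.cong[OF refl])
  fix b assume "b \<in> Pow ({..<n} - A)"
  then have "a \<union> b \<in> Pow {..<n}" "a' \<union> b \<in> Pow {..<n}"
    using assms(1,4,5) by auto
  then show "p1 (a \<union> b) * cnj (p2 (a' \<union> b)) = p1' (a \<union> b) * cnj (p2' (a' \<union> b))"
    using assms(2,3) by (simp add: vec_eq_def)
qed

lemma rdm_mvec_compl:
  assumes "unitary n W" "acts_on n ({..<n} - A) W" "A \<subseteq> {..<n}" "a \<in> Pow A" "a' \<in> Pow A"
  shows "rdm n A (mvec n W p1) (mvec n W p2) a a' = rdm n A p1 p2 a a'"
proof -
  let ?B = "{..<n} - A"
  have B: "?B \<subseteq> {..<n}" "{..<n} - ?B = A"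
    using assms(3) by auto
  have Wp: "mvec n W p (x \<union> b) = (\<Sum>t\<in>Pow ?B. W b t * p (x \<union> t))" if "x \<in> Pow A" "b \<in> Pow ?B" for p x b
    using mvec_acts_on_block[OF assms(2) B(1), of b x p] that B(2) by (simp add: Un_commute)
  have orth: "(\<Sum>b\<in>Pow ?B. W b t * cnj (W b t')) = idm t t'" if "t \<in> Pow ?B" "t' \<in> Pow ?B" for t t'
    using arg_cong[OF unitary_acts_on_block[OF assms(1,2) B(1) that], of cnj] by (simp add: mult.commute idm_def)
  have "rdm n A (mvec n W p1) (mvec n W p2) a a'
      = (\<Sum>b\<in>Pow ?B. \<Sum>t\<in>Pow ?B. \<Sum>t'\<in>Pow ?B. (W b t * cnj (W b t')) * (p1 (a \<union> t) * cnj (p2 (a' \<union> t'))))"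
    unfolding rdm_def using assms(4,5) by (intro sum.cong refl) (simp add: Wp cnj_sum sum_product mult_ac)
  also have "\<dots> = (\<Sum>t\<in>Pow ?B. \<Sum>t'\<in>Pow ?B. (\<Sum>b\<in>Pow ?B. W b t * cnj (W b t')) * (p1 (a \<union> t) * cnj (p2 (a' \<union> t'))))"
    unfolding sum_distrib_right by (subst sum.swap, intro sum.cong refl sum.swap)
  also have "\<dots> = rdm n A p1 p2 a a'"
    by (simp add: orth idm_def rdm_def if_distrib[of "\<lambda>x. x * _"] cong: if_cong)
  finally show ?thesis .
qed

lemma rdm_mvec_acts_on:
  assumes "acts_on n A V1" "acts_on n A V2" "A \<subseteq> {..<n}" "a \<in> Pow A" "a' \<in> Pow A"
  shows "rdm n A (mvec n V1 p1) (mvec n V2 p2) a a'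
     = (\<Sum>r\<in>Pow A. \<Sum>r'\<in>Pow A. (V1 a r * cnj (V2 a' r')) * rdm n A p1 p2 r r')"
proof -
  have "rdm n A (mvec n V1 p1) (mvec n V2 p2) a a'
      = (\<Sum>b\<in>Pow ({..<n} - A). \<Sum>r\<in>Pow A. \<Sum>r'\<in>Pow A. (V1 a r * cnj (V2 a' r')) * (p1 (r \<union> b) * cnj (p2 (r' \<union> b))))"
    unfolding rdm_def
    by (intro sum.cong refl)
      (simp add: mvec_acts_on_block[OF assms(1,3,4)] mvec_acts_on_block[OF assms(2,3,5)] cnj_sum sum_product mult_ac)
  also have "\<dots> = (\<Sum>r\<in>Pow A. \<Sum>r'\<in>Pow A. (V1 a r * cnj (V2 a' r')) * rdm n A p1 p2 r r')"
    unfolding rdm_def sum_distrib_left by (subst sum.swap, intro sum.cong refl sum.swap)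
  finally show ?thesis .
qed

lemma sum_norm_sandwich:
  assumes "unitary n V1" "acts_on n A V1" "unitary n V2" "acts_on n A V2" "A \<subseteq> {..<n}"
  shows "(\<Sum>a\<in>Pow A. \<Sum>a'\<in>Pow A. (cmod (\<Sum>r\<in>Pow A. \<Sum>r'\<in>Pow A. (V1 a r * cnj (V2 a' r')) * m r r'))\<^sup>2)
       = (\<Sum>r\<in>Pow A. \<Sum>r'\<in>Pow A. (cmod (m r r'))\<^sup>2)"
proof -
  have fin: "finite (Pow A)"
    using assms(5) finite_subset by auto
  define N where "N r a' = (\<Sum>r'\<in>Pow A. cnj (V2 a' r') * m r r')" for r a'
  have "(\<Sum>a\<in>Pow A. \<Sum>a'\<in>Pow A. (cmod (\<Sum>r\<in>Pow A. \<Sum>r'\<in>Pow A. (V1 a r * cnj (V2 a' r')) * m r r'))\<^sup>2)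
      = (\<Sum>a'\<in>Pow A. \<Sum>a\<in>Pow A. (cmod (\<Sum>r\<in>Pow A. V1 a r * N r a'))\<^sup>2)"
    unfolding N_def sum_distrib_left by (subst sum.swap) (simp add: mult_ac)
  also have "\<dots> = (\<Sum>a'\<in>Pow A. \<Sum>r\<in>Pow A. (cmod (N r a'))\<^sup>2)"
    by (rule sum.cong[OF refl], rule sum_norm_isometry[OF fin])
      (use unitary_acts_on_block[OF assms(1,2,5)] in \<open>auto simp: idm_def\<close>)
  also have "\<dots> = (\<Sum>r\<in>Pow A. \<Sum>a'\<in>Pow A. (cmod (\<Sum>r'\<in>Pow A. cnj (V2 a' r') * m r r'))\<^sup>2)"
    unfolding N_def by (rule sum.swap)
  also have "\<dots> = (\<Sum>r\<in>Pow A. \<Sum>r'\<in>Pow A. (cmod (m r r'))\<^sup>2)"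
  proof (rule sum.cong[OF refl], rule sum_norm_isometry[OF fin])
    fix r r' assume "r \<in> Pow A" "r' \<in> Pow A"
    from unitary_acts_on_block[OF assms(3,4,5) this]
    have "cnj (\<Sum>a\<in>Pow A. cnj (V2 a r) * V2 a r') = cnj (idm r r')"
      by simp
    then show "(\<Sum>a\<in>Pow A. cnj (cnj (V2 a r)) * cnj (V2 a r')) = (if r = r' then 1 else 0)"
      by (simp add: mult.commute idm_def)
  qed
  finally show ?thesis .
qed

lemma rdm_diag_pos:
  assumes "S \<in> Pow {..<n}" "p S \<noteq> 0"
  shows "0 < (cmod (rdm n A p p (S \<inter> A) (S \<inter> A)))\<^sup>2"
proof -
  have "S - A \<in> Pow ({..<n} - A)" "(S \<inter> A) \<union> (S - A) = S"
    using assms(1) by auto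
  then have "0 < (\<Sum>b\<in>Pow ({..<n} - A). (cmod (p ((S \<inter> A) \<union> b)))\<^sup>2)"
    using assms(2) by (intro sum_pos2[where i = "S - A"]) auto
  then show ?thesis
    unfolding rdm_diag norm_of_real by simp
qed

lemma purity_pos:
  assumes "A \<subseteq> {..<n}" "S \<in> Pow {..<n}" "p S \<noteq> 0"
  shows "0 < purity n A p"
proof -
  have "finite (Pow A)"
    using assms(1) finite_subset by auto
  then have "(cmod (rdm n A p p (S \<inter> A) (S \<inter> A)))\<^sup>2 \<le> purity n A p"
    unfolding purity_eq_sum_rdm by (intro diag_le_double_sum) auto
  then show ?thesis
    using rdm_diag_pos[of S n p A, OF assms(2,3)] by linarith
qed

locale block_factorisation =
  fixes n :: nat and A :: "nat set" and s :: qvec and chi :: "nat set \<Rightarrow> qvec"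
    and xi :: "nat \<Rightarrow> qvec" and V W :: "nat set \<Rightarrow> qmat" and M :: nat
  assumes A_subset: "A \<subseteq> {..<n}"
    and V: "\<forall>x\<in>Pow A. unitary n (V x) \<and> acts_on n A (V x)"
    and W: "\<forall>y\<in>Pow ({..<n} - A). unitary n (W y) \<and> acts_on n ({..<n} - A) (W y)"
    and factor: "\<forall>F\<in>Pow {..<n}. s F \<noteq> 0 \<longrightarrow>
      vec_eq n (chi F) (mvec n (V (F \<inter> A)) (mvec n (W (F - A)) (xi (card (F \<inter> A)))))"
    and card_support: "\<forall>F\<in>Pow {..<n}. s F \<noteq> 0 \<longrightarrow> card F = M"
begin

lemma rdm_chi:
  assumes "af \<in> Pow A" "af' \<in> Pow A" "aq \<in> Pow A" "aq' \<in> Pow A" "bf \<in> Pow ({..<n} - A)"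
    and "s (af \<union> bf) \<noteq> 0" "s (af' \<union> bf) \<noteq> 0"
  shows "rdm n A (chi (af \<union> bf)) (chi (af' \<union> bf)) aq aq'
       = (\<Sum>r\<in>Pow A. \<Sum>r'\<in>Pow A. (V af aq r * cnj (V af' aq' r')) * rdm n A (xi (card af)) (xi (card af')) r r')"
proof -
  have F: "af \<union> bf \<in> Pow {..<n}" "(af \<union> bf) \<inter> A = af" "af \<union> bf - A = bf"
    "af' \<union> bf \<in> Pow {..<n}" "(af' \<union> bf) \<inter> A = af'" "af' \<union> bf - A = bf"
    using assms(1,2,5) A_subset by auto
  have "rdm n A (chi (af \<union> bf)) (chi (af' \<union> bf)) aq aq'
      = rdm n A (mvec n (V af) (mvec n (W bf) (xi (card af)))) (mvec n (V af') (mvec n (W bf) (xi (card af')))) aq aq'"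
    using factor F assms(6,7) by (intro rdm_vec_eq[OF A_subset _ _ assms(3,4)]) auto
  also have "\<dots> = (\<Sum>r\<in>Pow A. \<Sum>r'\<in>Pow A. (V af aq r * cnj (V af' aq' r'))
      * rdm n A (mvec n (W bf) (xi (card af))) (mvec n (W bf) (xi (card af'))) r r')"
    using V assms(1,2) by (intro rdm_mvec_acts_on[OF _ _ A_subset assms(3,4)]) auto
  also have "\<dots> = (\<Sum>r\<in>Pow A. \<Sum>r'\<in>Pow A. (V af aq r * cnj (V af' aq' r')) * rdm n A (xi (card af)) (xi (card af')) r r')"
    using W assms(5) by (intro sum.cong refl) (simp add: rdm_mvec_compl[OF _ _ A_subset])
  finally show ?thesis .
qed

lemma rdm_card_mismatch:
  assumes "af \<in> Pow A" "af' \<in> Pow A" "card af \<noteq> card af'"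
  shows "rdm n A s s af af' = 0"
  unfolding rdm_def
proof (rule sum.neutral, rule ballI)
  fix bf assume bf: "bf \<in> Pow ({..<n} - A)"
  have fin: "finite af" "finite af'" "finite bf"
    using assms(1,2) bf A_subset by (auto intro: finite_subset[of _ "{..<n}"] dest: subset_trans)
  have "af \<inter> bf = {}" "af' \<inter> bf = {}"
    using assms(1,2) bf by auto
  then have "card (af \<union> bf) \<noteq> card (af' \<union> bf)"
    using assms(3) fin by (simp add: card_Un_disjoint)
  moreover have "af \<union> bf \<in> Pow {..<n}" "af' \<union> bf \<in> Pow {..<n}"
    using assms(1,2) bf A_subset by auto
  ultimately have "s (af \<union> bf) = 0 \<or> s (af' \<union> bf) = 0"
    using card_support by metis
  then show "s (af \<union> bf) * cnj (s (af' \<union> bf)) = 0"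
    by auto
qed

lemma purity_joint_eq:
  "purity_joint n A (\<lambda>S F. s F * chi F S)
     = (\<Sum>af\<in>Pow A. \<Sum>af'\<in>Pow A. (cmod (rdm n A s s af af'))\<^sup>2 * purity n A (xi (card af)))"
proof -
  let ?B = "Pow ({..<n} - A)"
  define T where "T af af' aq aq' = (\<Sum>r\<in>Pow A. \<Sum>r'\<in>Pow A. (V af aq r * cnj (V af' aq' r'))
      * rdm n A (xi (card af)) (xi (card af')) r r')" for af af' aq aq'
  have joint: "(\<Sum>bq\<in>?B. \<Sum>bf\<in>?B. s (af \<union> bf) * chi (af \<union> bf) (aq \<union> bq)
        * cnj (s (af' \<union> bf) * chi (af' \<union> bf) (aq' \<union> bq)))
      = rdm n A s s af af' * T af af' aq aq'"
    if "af \<in> Pow A" "af' \<in> Pow A" "aq \<in> Pow A" "aq' \<in> Pow A" for af af' aq aq'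
  proof -
    have "(\<Sum>bq\<in>?B. \<Sum>bf\<in>?B. s (af \<union> bf) * chi (af \<union> bf) (aq \<union> bq)
        * cnj (s (af' \<union> bf) * chi (af' \<union> bf) (aq' \<union> bq)))
      = (\<Sum>bf\<in>?B. (s (af \<union> bf) * cnj (s (af' \<union> bf))) * rdm n A (chi (af \<union> bf)) (chi (af' \<union> bf)) aq aq')"
      unfolding rdm_def sum_distrib_left
      by (subst sum.swap) (simp add: mult_ac)
    also have "\<dots> = (\<Sum>bf\<in>?B. (s (af \<union> bf) * cnj (s (af' \<union> bf))) * T af af' aq aq')"
      using rdm_chi[OF that] unfolding T_def by (intro sum.cong refl) auto
    also have "\<dots> = rdm n A s s af af' * T af af' aq aq'"
      by (simp add: rdm_def sum_distrib_right)
    finally show ?thesis .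
  qed
  have "purity_joint n A (\<lambda>S F. s F * chi F S)
      = (\<Sum>aq\<in>Pow A. \<Sum>af\<in>Pow A. \<Sum>aq'\<in>Pow A. \<Sum>af'\<in>Pow A. (cmod (rdm n A s s af af'))\<^sup>2 * (cmod (T af af' aq aq'))\<^sup>2)"
    unfolding purity_joint_eq_sum_norm
    by (intro sum.cong refl) (simp only: joint norm_mult power_mult_distrib)
  also have "\<dots> = (\<Sum>af\<in>Pow A. \<Sum>aq\<in>Pow A. \<Sum>af'\<in>Pow A. \<Sum>aq'\<in>Pow A.
      (cmod (rdm n A s s af af'))\<^sup>2 * (cmod (T af af' aq aq'))\<^sup>2)"
    by (rule sum.swap[THEN trans], rule sum.cong[OF refl], rule sum.cong[OF refl], rule sum.swap)
  also have "\<dots> = (\<Sum>af\<in>Pow A. \<Sum>af'\<in>Pow A. (cmod (rdm n A s s af af'))\<^sup>2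
      * (\<Sum>aq\<in>Pow A. \<Sum>aq'\<in>Pow A. (cmod (T af af' aq aq'))\<^sup>2))"
    unfolding sum_distrib_left by (rule sum.cong[OF refl], rule sum.swap)
  also have "\<dots> = (\<Sum>af\<in>Pow A. \<Sum>af'\<in>Pow A. (cmod (rdm n A s s af af'))\<^sup>2 * purity n A (xi (card af)))"
  proof (intro sum.cong refl)
    fix af af' assume af: "af \<in> Pow A" "af' \<in> Pow A"
    show "(cmod (rdm n A s s af af'))\<^sup>2 * (\<Sum>aq\<in>Pow A. \<Sum>aq'\<in>Pow A. (cmod (T af af' aq aq'))\<^sup>2)
        = (cmod (rdm n A s s af af'))\<^sup>2 * purity n A (xi (card af))"
    proof (cases "card af = card af'")
      case True
      have "(\<Sum>aq\<in>Pow A. \<Sum>aq'\<in>Pow A. (cmod (T af af' aq aq'))\<^sup>2)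
          = (\<Sum>r\<in>Pow A. \<Sum>r'\<in>Pow A. (cmod (rdm n A (xi (card af)) (xi (card af')) r r'))\<^sup>2)"
        unfolding T_def using V af by (intro sum_norm_sandwich[OF _ _ _ _ A_subset]) auto
      then show ?thesis
        using True by (simp add: purity_eq_sum_rdm)
    next
      case False
      then show ?thesis
        using rdm_card_mismatch[OF af] by simp
    qed
  qed
  finally show ?thesis .
qed

lemma renyi2_joint_ge:
  assumes nonzero: "\<exists>F\<in>Pow {..<n}. s F \<noteq> 0"
    and xi_bound: "\<forall>F\<in>Pow {..<n}. s F \<noteq> 0 \<longrightarrow>
      0 < purity n A (xi (card (F \<inter> A))) \<and> m \<le> renyi2 n A (xi (card (F \<inter> A)))"
  shows "renyi2 n A s + m \<le> renyi2_joint n A (\<lambda>S F. s F * chi F S)"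
proof -
  let ?P = "\<lambda>af. purity n A (xi (card af))"
  let ?w = "\<lambda>af af'. (cmod (rdm n A s s af af'))\<^sup>2"
  let ?pj = "purity_joint n A (\<lambda>S F. s F * chi F S)"
  define K where "K = (\<lambda>F. F \<inter> A) ` {F \<in> Pow {..<n}. s F \<noteq> 0}"
  have fin: "finite (Pow A)" "finite K"
    using A_subset finite_subset unfolding K_def by auto
  obtain F0 where F0: "F0 \<in> Pow {..<n}" "s F0 \<noteq> 0"
    using nonzero by blast
  have K_good: "0 < ?P af \<and> m \<le> renyi2 n A (xi (card af))" if "af \<in> K" for af
    using xi_bound that unfolding K_def by blast
  have w_outside: "?w af af' = 0" if "af \<in> Pow A" "af \<notin> K" for af af'
  proof -
    have "s (af \<union> b) = 0" if "b \<in> Pow ({..<n} - A)" for b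
    proof -
      have "af \<union> b \<in> Pow {..<n}" "(af \<union> b) \<inter> A = af"
        using \<open>af \<in> Pow A\<close> that A_subset by auto
      then show ?thesis
        using \<open>af \<notin> K\<close> unfolding K_def by (metis (mono_tags, lifting) image_eqI mem_Collect_eq)
    qed
    then show ?thesis
      by (simp add: rdm_def)
  qed
  define Pm where "Pm = Max (?P ` K)"
  have "F0 \<inter> A \<in> K"
    using F0 unfolding K_def by blast
  then have "Pm \<in> ?P ` K" "\<And>af. af \<in> K \<Longrightarrow> ?P af \<le> Pm"
    using fin(2) unfolding Pm_def by (auto intro: Max_in)
  then obtain af0 where "af0 \<in> K" "?P af0 = Pm"
    by blast
  then have Pm: "0 < Pm" "m \<le> - ln Pm"
    using K_good[of af0] by (auto simp: renyi2_def)
  have "?pj = (\<Sum>af\<in>Pow A. \<Sum>af'\<in>Pow A. ?w af af' * ?P af)"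
    by (rule purity_joint_eq)
  also have "\<dots> \<le> (\<Sum>af\<in>Pow A. \<Sum>af'\<in>Pow A. Pm * ?w af af')"
    using \<open>\<And>af. af \<in> K \<Longrightarrow> ?P af \<le> Pm\<close> w_outside
    by (intro sum_mono) (metis mult.commute mult_right_mono mult_zero_left zero_le_power2 order_refl)
  also have "\<dots> = Pm * purity n A s"
    by (simp add: purity_eq_sum_rdm sum_distrib_left)
  finally have upper: "?pj \<le> Pm * purity n A s" .
  have "0 < ?w (F0 \<inter> A) (F0 \<inter> A) * ?P (F0 \<inter> A)"
    using rdm_diag_pos[of F0 n s A, OF F0] K_good[OF \<open>F0 \<inter> A \<in> K\<close>] by simp
  also have "\<dots> \<le> (\<Sum>af\<in>Pow A. \<Sum>af'\<in>Pow A. ?w af af' * ?P af)"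
    using fin(1) F0 by (intro diag_le_double_sum) (auto simp: purity_nonneg)
  finally have pj_pos: "0 < ?pj"
    by (simp add: purity_joint_eq)
  have ps_pos: "0 < purity n A s"
    using upper pj_pos Pm(1) purity_nonneg[of n A s] by (metis less_le_trans mult_eq_0_iff order_less_le)
  have "ln ?pj \<le> ln (Pm * purity n A s)"
    using upper pj_pos by simp
  also have "\<dots> = ln Pm + ln (purity n A s)"
    using Pm(1) ps_pos by (rule ln_mult_pos)
  finally show ?thesis
    using Pm(2) by (simp add: renyi2_def renyi2_joint_def)
qed

end

section \<open>Fermions\<close>

definition jw_sign :: "nat set \<Rightarrow> nat \<Rightarrow> complex" where
  "jw_sign F t = (-1) ^ card {s\<in>F. s < t}"

definition ann :: "nat \<Rightarrow> qvec \<Rightarrow> qvec" where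
  "ann t v F = (if t \<notin> F then jw_sign F t * v (insert t F) else 0)"

lemma cdag_eq: "cdag t v F = (if t \<in> F then jw_sign F t * v (F - {t}) else 0)"
  by (simp add: cdag_def jw_sign_def)

lemma jw_sign_square: "jw_sign F t * jw_sign F t = 1"
  by (simp add: jw_sign_def power_add[symmetric])

lemma cnj_jw_sign: "cnj (jw_sign F t) = jw_sign F t"
  by (simp add: jw_sign_def)

lemma jw_sign_insert:
  assumes "finite F" "s \<notin> F"
  shows "jw_sign (insert s F) t = (if s < t then -1 else 1) * jw_sign F t"
proof (cases "s < t")
  case True
  then have "{x\<in>insert s F. x < t} = insert s {x\<in>F. x < t}"
    by auto
  then show ?thesis
    using True assms by (simp add: jw_sign_def)
next
  case False
  then have "{x\<in>insert s F. x < t} = {x\<in>F. x < t}"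
    by auto
  then show ?thesis
    using False by (simp add: jw_sign_def)
qed

lemma jw_sign_insert_self: "jw_sign (insert t F) t = jw_sign F t"
proof -
  have "{x\<in>insert t F. x < t} = {x\<in>F. x < t}"
    by auto
  then show ?thesis
    by (simp add: jw_sign_def)
qed

lemma ann_cdag_anticommute:
  assumes "finite F"
  shows "ann s (cdag t v) F + cdag t (ann s v) F = (if s = t then v F else 0)"
proof (cases "s = t")
  case True
  have "jw_sign (F - {t}) t = jw_sign F t" if "t \<in> F"
    using jw_sign_insert_self[of t "F - {t}"] that by (simp add: insert_absorb)
  then show ?thesis
    using True jw_sign_square[of F t]
    by (cases "t \<in> F") (simp_all add: ann_def cdag_eq jw_sign_insert_self insert_absorb mult.assoc[symmetric])
next
  case False
  show ?thesis
  proof (cases "s \<notin> F \<and> t \<in> F")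
    case True
    have key: "jw_sign F s * jw_sign (insert s F) t = - (jw_sign F t * jw_sign (F - {t}) s)"
    proof -
      have "jw_sign F s = (if t < s then -1 else 1) * jw_sign (F - {t}) s"
        using jw_sign_insert[of "F - {t}" t s] assms True by (simp add: insert_absorb)
      moreover have "jw_sign (insert s F) t = (if s < t then -1 else 1) * jw_sign F t"
        using jw_sign_insert[OF assms] True by simp
      ultimately show ?thesis
        using False by (auto simp: mult_ac)
    qed
    moreover have "insert s F - {t} = insert s (F - {t})"
      using False by auto
    ultimately show ?thesis
      using True False by (simp add: ann_def cdag_eq mult.assoc[symmetric] key)
  next
    case nT: False
    then show ?thesis
      using False by (auto simp: ann_def cdag_eq)
  qed
qed

definition fock_inner :: "nat \<Rightarrow> qvec \<Rightarrow> qvec \<Rightarrow> complex" where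
  "fock_inner n v w = (\<Sum>F\<in>Pow {..<n}. cnj (v F) * w F)"

lemma fock_inner_vec_eq: "vec_eq n v v' \<Longrightarrow> vec_eq n w w' \<Longrightarrow> fock_inner n v w = fock_inner n v' w'"
  unfolding fock_inner_def vec_eq_def by (intro sum.cong) auto

lemma fock_inner_cdag:
  assumes "t < n"
  shows "fock_inner n (cdag t v) w = fock_inner n v (ann t w)"
proof -
  have split: "(\<Sum>F\<in>Pow {..<n}. g F) = (\<Sum>b\<in>Pow ({..<n} - {t}). g b + g (insert t b))" for g :: "nat set \<Rightarrow> complex"
  proof -
    have "Pow {t} = {{}, {t}}"
      by blast
    then show ?thesis
      using sum_Pow_split[of "{..<n}" "{t}" g] assms by (simp add: sum.distrib)
  qed
  have "cnj (cdag t v b) * w b + cnj (cdag t v (insert t b)) * w (insert t b)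
      = cnj (v b) * ann t w b + cnj (v (insert t b)) * ann t w (insert t b)"
    if "b \<in> Pow ({..<n} - {t})" for b
  proof -
    have "t \<notin> b" "insert t b - {t} = b"
      using that by auto
    then show ?thesis
      by (simp add: cdag_eq ann_def jw_sign_insert_self cnj_jw_sign mult_ac)
  qed
  then show ?thesis
    unfolding fock_inner_def split by (rule sum.cong[OF refl])
qed

definition wave :: "nat \<Rightarrow> real \<Rightarrow> nat \<Rightarrow> nat \<Rightarrow> complex" where
  "wave n theta m t = complex_of_real (1 / sqrt (real n))
     * exp (\<i> * complex_of_real ((2 * pi * real m / real n - theta / real n) * real t))"

definition ann_mom :: "nat \<Rightarrow> real \<Rightarrow> nat \<Rightarrow> qvec \<Rightarrow> qvec" where
  "ann_mom n theta m w F = (\<Sum>t<n. cnj (wave n theta m t) * ann t w F)"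

lemma cdag_mom_eq: "cdag_mom n theta (2 * pi * real m / real n) v F = (\<Sum>t<n. wave n theta m t * cdag t v F)"
  by (simp add: cdag_mom_def wave_def)

lemma fock_inner_cdag_mom:
  "fock_inner n (cdag_mom n theta (2 * pi * real m / real n) v) w = fock_inner n v (ann_mom n theta m w)"
proof -
  have "fock_inner n (cdag_mom n theta (2 * pi * real m / real n) v) w
      = (\<Sum>t<n. cnj (wave n theta m t) * fock_inner n (cdag t v) w)"
    unfolding fock_inner_def cdag_mom_eq cnj_sum sum_distrib_left sum_distrib_right
    by (subst sum.swap) (simp add: mult_ac)
  also have "\<dots> = (\<Sum>t<n. cnj (wave n theta m t) * fock_inner n v (ann t w))"
    by (simp add: fock_inner_cdag)
  also have "\<dots> = fock_inner n v (ann_mom n theta m w)"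
    unfolding fock_inner_def ann_mom_def sum_distrib_left by (subst sum.swap) (simp add: mult_ac)
  finally show ?thesis .
qed

lemma ann_sum: "ann s (\<lambda>G. \<Sum>t<n. c t * g t G) F = (\<Sum>t<n. c t * ann s (g t) F)"
  by (simp add: ann_def sum_distrib_left mult_ac)

lemma cdag_sum: "cdag t (\<lambda>G. \<Sum>s<n. c s * g s G) F = (\<Sum>s<n. c s * cdag t (g s) F)"
  by (simp add: cdag_def sum_distrib_left mult_ac)

lemma ann_mom_cdag_mom_anticommute:
  assumes "finite F"
  shows "ann_mom n theta m (cdag_mom n theta (2 * pi * real m' / real n) v) F
       + cdag_mom n theta (2 * pi * real m' / real n) (ann_mom n theta m v) F
     = (\<Sum>t<n. cnj (wave n theta m t) * wave n theta m' t) * v F"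
proof -
  let ?c = "\<lambda>s t. cnj (wave n theta m s) * wave n theta m' t"
  have "ann_mom n theta m (cdag_mom n theta (2 * pi * real m' / real n) v) F
      = (\<Sum>s<n. \<Sum>t<n. ?c s t * ann s (cdag t v) F)"
    unfolding ann_mom_def cdag_mom_eq[abs_def] ann_sum by (simp add: sum_distrib_left mult_ac)
  moreover have "cdag_mom n theta (2 * pi * real m' / real n) (ann_mom n theta m v) F
      = (\<Sum>s<n. \<Sum>t<n. ?c s t * cdag t (ann s v) F)"
    unfolding cdag_mom_eq ann_mom_def[abs_def] cdag_sum by (subst sum.swap) (simp add: sum_distrib_left mult_ac)
  ultimately have "ann_mom n theta m (cdag_mom n theta (2 * pi * real m' / real n) v) F
       + cdag_mom n theta (2 * pi * real m' / real n) (ann_mom n theta m v) F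
     = (\<Sum>s<n. \<Sum>t<n. ?c s t * (if s = t then v F else 0))"
    by (simp add: ann_cdag_anticommute[OF assms, symmetric] sum.distrib[symmetric] distrib_left)
  also have "\<dots> = (\<Sum>t<n. cnj (wave n theta m t) * wave n theta m' t) * v F"
    by (simp add: if_distrib[of "\<lambda>x. _ * x"] sum_distrib_right cong: if_cong)
  finally show ?thesis .
qed

lemma wave_orthonormal:
  assumes "0 < n" "m < n" "m' < n"
  shows "(\<Sum>t<n. cnj (wave n theta m t) * wave n theta m' t) = (if m = m' then 1 else 0)"
proof -
  define z where "z = cis (2 * pi * (real m' - real m) / real n)"
  have wave_cis: "wave n theta k t = complex_of_real (1 / sqrt (real n)) * cis ((2 * pi * real k / real n - theta / real n) * real t)" for k t
    by (simp add: wave_def cis_conv_exp)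
  have "cnj (wave n theta m t) * wave n theta m' t = complex_of_real (1 / real n) * z ^ t" for t
  proof -
    have "cnj (wave n theta m t) * wave n theta m' t
        = (complex_of_real (1 / sqrt (real n)) * complex_of_real (1 / sqrt (real n)))
          * (cis (- ((2 * pi * real m / real n - theta / real n) * real t)) * cis ((2 * pi * real m' / real n - theta / real n) * real t))"
      by (simp add: wave_cis cis_cnj mult_ac)
    also have "complex_of_real (1 / sqrt (real n)) * complex_of_real (1 / sqrt (real n)) = complex_of_real (1 / real n)"
      using assms(1) by (simp flip: of_real_mult)
    also have "cis (- ((2 * pi * real m / real n - theta / real n) * real t)) * cis ((2 * pi * real m' / real n - theta / real n) * real t)
        = cis (real t * (2 * pi * (real m' - real m) / real n))"
      by (simp add: cis_mult algebra_simps diff_divide_distrib)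
    also have "\<dots> = z ^ t"
      by (simp add: z_def DeMoivre)
    finally show ?thesis .
  qed
  then have sum: "(\<Sum>t<n. cnj (wave n theta m t) * wave n theta m' t) = complex_of_real (1 / real n) * (\<Sum>t<n. z ^ t)"
    by (simp add: sum_distrib_left)
  show ?thesis
  proof (cases "m = m'")
    case True
    then show ?thesis
      using assms(1) sum by (simp add: z_def)
  next
    case False
    have "cis (2 * pi * real m' / real n) \<noteq> cis (2 * pi * real m / real n)"
      using bij_betw_roots_unity[OF assms(1)] assms(2,3) False
      unfolding bij_betw_def inj_on_def by blast
    then have "z \<noteq> 1"
      by (auto simp: z_def diff_divide_distrib right_diff_distrib cis_divide[symmetric])
    moreover have "z ^ n = 1"
    proof -
      have "z ^ n = cis (2 * pi * (real m' - real m))"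
        using assms(1) by (simp add: z_def DeMoivre)
      also have "\<dots> = 1"
        by (rule cis_multiple_2pi) (metis Ints_diff Ints_of_nat)
      finally show ?thesis .
    qed
    ultimately have "(\<Sum>t<n. z ^ t) = 0"
      by (simp add: sum_gp_strict)
    then show ?thesis
      using False sum by simp
  qed
qed

lemma slater_Cons: "slater n theta (m # ms) = cdag_mom n theta (2 * pi * real m / real n) (slater n theta ms)"
  by (simp add: slater_def)

lemma slater_orthonormal:
  "distinct ms \<Longrightarrow> \<forall>m\<in>set ms. m < n \<Longrightarrow>
    fock_inner n (slater n theta ms) (slater n theta ms) = 1 \<and>
    (\<forall>m<n. m \<notin> set ms \<longrightarrow> vec_eq n (ann_mom n theta m (slater n theta ms)) (\<lambda>_. 0))"
proof (induction ms)
  case Nil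
  have "fock_inner n vac vac = (\<Sum>F\<in>Pow {..<n}. if F = {} then 1 else 0)"
    unfolding fock_inner_def vac_def by (intro sum.cong) auto
  then have "fock_inner n vac vac = 1"
    by simp
  moreover have "ann t vac F = 0" for t F
    by (simp add: ann_def vac_def)
  then have "ann_mom n theta m vac F = 0" for m F
    by (simp add: ann_mom_def)
  ultimately show ?case
    by (simp add: slater_def vec_eq_def)
next
  case (Cons m0 ms)
  define v where "v = slater n theta ms"
  let ?c = "cdag_mom n theta (2 * pi * real m0 / real n)"
  have m0: "m0 < n" "m0 \<notin> set ms"
    using Cons.prems by auto
  have IH: "fock_inner n v v = 1" "\<And>m. m < n \<Longrightarrow> m \<notin> set ms \<Longrightarrow> vec_eq n (ann_mom n theta m v) (\<lambda>_. 0)"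
    using Cons.IH Cons.prems unfolding v_def by auto
  have c_zero: "vec_eq n (?c (ann_mom n theta m v)) (\<lambda>_. 0)" if "m < n" "m \<notin> set ms" for m
    using IH(2)[OF that] unfolding vec_eq_def by (auto simp: cdag_mom_eq cdag_def intro!: sum.neutral)
  have anticomm: "ann_mom n theta m (?c v) F = (if m = m0 then v F else 0) - ?c (ann_mom n theta m v) F"
    if "m < n" "F \<in> Pow {..<n}" for m F
    using ann_mom_cdag_mom_anticommute[of F n theta m m0 v] wave_orthonormal[of n m m0 theta] m0(1) that(1)
      finite_subset[of F "{..<n}"] that(2) by (simp add: eq_diff_eq)
  have "vec_eq n (ann_mom n theta m0 (?c v)) v"
    using anticomm[OF m0(1)] c_zero[OF m0] by (simp add: vec_eq_def)
  then have "fock_inner n (?c v) (?c v) = 1"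
    using IH(1) fock_inner_vec_eq[OF vec_eq_refl] by (simp add: fock_inner_cdag_mom)
  moreover have "vec_eq n (ann_mom n theta m (?c v)) (\<lambda>_. 0)" if "m < n" "m \<notin> set (m0 # ms)" for m
    using anticomm[OF that(1)] c_zero[OF that(1)] that(2) by (simp add: vec_eq_def)
  ultimately show ?case
    by (simp add: slater_Cons v_def)
qed

lemma slater_nonzero:
  assumes "distinct ms" "\<forall>m\<in>set ms. m < n"
  shows "\<exists>F\<in>Pow {..<n}. slater n theta ms F \<noteq> 0"
proof (rule ccontr)
  assume "\<not> ?thesis"
  then have "fock_inner n (slater n theta ms) (slater n theta ms) = 0"
    unfolding fock_inner_def by (intro sum.neutral) auto
  then show False
    using slater_orthonormal[OF assms, of theta] by simp
qed

lemma slater_card: "finite F \<Longrightarrow> slater n theta ms F \<noteq> 0 \<Longrightarrow> card F = length ms"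
proof (induction ms arbitrary: F)
  case Nil
  then show ?case
    by (simp add: slater_def vac_def split: if_splits)
next
  case (Cons m ms)
  then have "(\<Sum>t<n. wave n theta m t * cdag t (slater n theta ms) F) \<noteq> 0"
    by (simp add: slater_Cons cdag_mom_eq)
  then obtain t where "cdag t (slater n theta ms) F \<noteq> 0"
    by (metis (no_types, lifting) mult_zero_right sum.neutral)
  then have t: "t \<in> F" "slater n theta ms (F - {t}) \<noteq> 0"
    by (auto simp: cdag_def split: if_splits)
  moreover have "0 < card F"
    using t(1) Cons.prems(1) card_gt_0_iff by blast
  ultimately show ?case
    using Cons.IH[of "F - {t}"] Cons.prems(1) by simp
qed

section \<open>The entanglement bound\<close>

lemma cyclic_interval_cases:
  assumes "cyclic_interval n A"
  obtains p q where "p \<le> q" "q \<le> n" "A = {p..<q} \<or> A = {..<n} - {p..<q}"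
proof -
  obtain a l where al: "a < n" "l \<le> n" "A = {(a + j) mod n | j. j < l}"
    using assms unfolding cyclic_interval_def by blast
  show ?thesis
  proof (cases "a + l \<le> n")
    case True
    have "A = {a..<a + l}"
    proof (intro equalityI subsetI)
      fix x assume "x \<in> A"
      then obtain j where "j < l" "x = (a + j) mod n"
        using al by blast
      then show "x \<in> {a..<a + l}"
        using True by simp
    next
      fix x assume "x \<in> {a..<a + l}"
      then have "x = (a + (x - a)) mod n" "x - a < l"
        using True by auto
      then show "x \<in> A"
        using al by blast
    qed
    then show ?thesis
      using that[of a "a + l"] True by simp
  next
    case False
    have "A = {..<n} - {a + l - n..<a}"
    proof (intro equalityI subsetI)
      fix x assume "x \<in> A"
      then obtain j where j: "j < l" "x = (a + j) mod n"
        using al by blast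
      show "x \<in> {..<n} - {a + l - n..<a}"
      proof (cases "a + j < n")
        case True
        then show ?thesis
          using j by simp
      next
        case False
        then have "x = a + j - n"
          using j al le_mod_geq[of n "a + j"] by simp
        then show ?thesis
          using False j al by auto
      qed
    next
      fix x assume x: "x \<in> {..<n} - {a + l - n..<a}"
      show "x \<in> A"
      proof (cases "a \<le> x")
        case True
        then have "x = (a + (x - a)) mod n" "x - a < l"
          using x False by auto
        then show ?thesis
          using al by blast
      next
        case False
        then have "x = (a + (x + n - a)) mod n" "x + n - a < l"
          using x al by (auto simp: le_mod_geq)
        then show ?thesis
          using al by blast
      qed
    qed
    then show ?thesis
      using that[of "a + l - n" a] al by simp
  qed
qed

context clock_eigvec
begin

lemma renyi2_UT_bound:
  assumes "A \<subseteq> {..<n}" "S \<in> Pow {..<n}" "phi S \<noteq> 0" "T \<subseteq> {..<n}" "card T \<le> M"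
  shows "0 < purity n A (UT n u T phi)"
    and "Min ((\<lambda>T. renyi2 n A (UT n u T phi)) ` {T. T \<subseteq> {..<n} \<and> card T \<le> M}) \<le> renyi2 n A (UT n u T phi)"
proof -
  have "unitary n (Ulist n u (sorted_list_of_set T))"
    using assms(4) finite_subset[OF assms(4)] by (intro Ulist_unitary) auto
  then have "\<exists>S'\<in>Pow {..<n}. mvec n (Ulist n u (sorted_list_of_set T)) phi S' \<noteq> 0"
    using assms(2,3) by (rule mvec_unitary_nonzero[of n _ S phi])
  then obtain S' where "S' \<in> Pow {..<n}" "mvec n (Ulist n u (sorted_list_of_set T)) phi S' \<noteq> 0"
    by blast
  then show "0 < purity n A (UT n u T phi)"
    using UT_eq_Ulist[of n u T phi] by (intro purity_pos[OF assms(1)]) (auto simp: vec_eq_def)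
  have "finite {T. T \<subseteq> {..<n} \<and> card T \<le> M}"
    by (rule finite_subset[of _ "Pow {..<n}"]) auto
  then show "Min ((\<lambda>T. renyi2 n A (UT n u T phi)) ` {T. T \<subseteq> {..<n} \<and> card T \<le> M}) \<le> renyi2 n A (UT n u T phi)"
    using assms(4,5) by (intro Min_le) auto
qed

lemma renyi2_interval:
  assumes "p \<le> q" "q \<le> n" "distinct ms" "\<forall>m\<in>set ms. m < n" "S \<in> Pow {..<n}" "phi S \<noteq> 0"
  shows "renyi2 n {p..<q} (slater n theta ms)
           + Min ((\<lambda>T. renyi2 n {p..<q} (UT n u T phi)) ` {T. T \<subseteq> {..<n} \<and> card T \<le> length ms})
         \<le> renyi2_joint n {p..<q} (Psi n u theta phi ms)"
proof -
  let ?A = "{p..<q}"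
  obtain V W where VW: "\<forall>x\<in>Pow ?A. unitary n (V x) \<and> acts_on n ?A (V x)"
    "\<forall>y\<in>Pow ({..<n} - ?A). unitary n (W y) \<and> acts_on n ({..<n} - ?A) (W y)"
    "\<forall>F\<in>Pow {..<n}. vec_eq n (UT n u F phi)
       (mvec n (V (F \<inter> ?A)) (mvec n (W (F - ?A)) (UT n u {p..<p + card (F \<inter> ?A)} phi)))"
    using UT_factorisation[OF assms(1,2)] by blast
  have support: "\<forall>F\<in>Pow {..<n}. slater n theta ms F \<noteq> 0 \<longrightarrow> card F = length ms"
    using slater_card finite_subset by blast
  interpret block_factorisation n ?A "slater n theta ms" "\<lambda>F. UT n u F phi" "\<lambda>k. UT n u {p..<p + k} phi" V W "length ms"
    using assms(2) VW support by unfold_locales auto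
  have "renyi2 n ?A (slater n theta ms)
           + Min ((\<lambda>T. renyi2 n ?A (UT n u T phi)) ` {T. T \<subseteq> {..<n} \<and> card T \<le> length ms})
         \<le> renyi2_joint n ?A (\<lambda>S F. slater n theta ms F * UT n u F phi S)"
  proof (rule renyi2_joint_ge)
    show "\<exists>F\<in>Pow {..<n}. slater n theta ms F \<noteq> 0"
      using slater_nonzero assms(3,4) by blast
    show "\<forall>F\<in>Pow {..<n}. slater n theta ms F \<noteq> 0 \<longrightarrow>
      0 < purity n ?A (UT n u {p..<p + card (F \<inter> ?A)} phi) \<and>
      Min ((\<lambda>T. renyi2 n ?A (UT n u T phi)) ` {T. T \<subseteq> {..<n} \<and> card T \<le> length ms})
        \<le> renyi2 n ?A (UT n u {p..<p + card (F \<inter> ?A)} phi)"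
    proof (intro ballI impI)
      fix F assume F: "F \<in> Pow {..<n}" "slater n theta ms F \<noteq> 0"
      have "card (F \<inter> ?A) \<le> q - p" "card (F \<inter> ?A) \<le> length ms"
        using F support card_mono[of ?A "F \<inter> ?A"] card_mono[of F "F \<inter> ?A"] finite_subset[of F "{..<n}"] by auto
      then have "?A \<subseteq> {..<n}" "{p..<p + card (F \<inter> ?A)} \<subseteq> {..<n}" "card {p..<p + card (F \<inter> ?A)} \<le> length ms"
        using assms(1,2) by auto
      then show "0 < purity n ?A (UT n u {p..<p + card (F \<inter> ?A)} phi) \<and>
        Min ((\<lambda>T. renyi2 n ?A (UT n u T phi)) ` {T. T \<subseteq> {..<n} \<and> card T \<le> length ms})
          \<le> renyi2 n ?A (UT n u {p..<p + card (F \<inter> ?A)} phi)"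
        using renyi2_UT_bound[of ?A S "{p..<p + card (F \<inter> ?A)}" "length ms"] assms(1,2,5,6) by auto
    qed
  qed
  then show ?thesis
    by (simp add: Psi_def[abs_def])
qed

end

theorem theoremA1:
  fixes n :: nat and u :: "nat \<Rightarrow> qmat" and c :: complex
    and phi :: qvec and theta :: real and ms :: "nat list" and A :: "nat set"
  assumes "n \<ge> 2"
    and "\<forall>t < n - 1. unitary_on n (u t) \<and> acts_on_pair n (u t) t"
    and "cmod c = 1"
    and "\<forall>S\<in>Pow {..<n}. \<forall>T\<in>Pow {..<n}. u (n - 1) S T = c * idm S T"
    and "(\<Sum>S\<in>Pow {..<n}. (cmod (phi S))\<^sup>2) = 1"
    and "\<forall>S\<in>Pow {..<n}. mvec n (Uprod n u n) phi S = exp (\<i> * complex_of_real theta) * phi S"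
    and "distinct ms" and "\<forall>m\<in>set ms. m < n"
    and "cyclic_interval n A"
  shows "renyi2_joint n A (Psi n u theta phi ms)
         \<ge> renyi2 n A (slater n theta ms)
           + Min ((\<lambda>T. renyi2 n A (UT n u T phi)) ` {T. T \<subseteq> {..<n} \<and> card T \<le> length ms})"
proof -
  interpret clock_eigvec n u c phi "exp (\<i> * complex_of_real theta)"
    using assms(2-4,6) by unfold_locales (auto simp: vec_eq_def cis_conv_exp[symmetric])
  obtain S where S: "S \<in> Pow {..<n}" "phi S \<noteq> 0"
    using assms(5) by (metis (no_types, lifting) norm_zero power_zero_numeral sum.neutral zero_neq_one)
  obtain p q where pq: "p \<le> q" "q \<le> n" "A = {p..<q} \<or> A = {..<n} - {p..<q}"
    using cyclic_interval_cases[OF assms(9)] by blast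
  have interval: "renyi2 n {p..<q} (slater n theta ms)
           + Min ((\<lambda>T. renyi2 n {p..<q} (UT n u T phi)) ` {T. T \<subseteq> {..<n} \<and> card T \<le> length ms})
         \<le> renyi2_joint n {p..<q} (Psi n u theta phi ms)"
    by (rule renyi2_interval[OF pq(1,2) assms(7,8) S])
  have "{p..<q} \<subseteq> {..<n}"
    using pq(2) by auto
  then show ?thesis
    using pq(3) interval by (auto simp: renyi2_compl renyi2_joint_compl)
qed

end
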